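(* Let $\Omega_{nl}\subset\mathbb{R}^2$ be a bounded, connected, convex domain with $C^3$ boundary, let $\Gamma_i\subset\partial\Omega_{nl}$ be a boundary curve, and let $J_\delta$ be a kernel as described in the context. For $\delta>0$ and $\mathbf{x}\in B\Omega_i$ define $$Q_\delta(\mathbf{x}):=1-\int_{\mathbb{R}^2\setminus\Omega_{nl}} J_{\delta}(|\mathbf{x}-\mathbf{y}|)\left[|(\mathbf{y}-\overline{\mathbf{x}})\cdot\mathbf{n}(\overline{\mathbf{x}})|^2-|(\mathbf{x}-\overline{\mathbf{x}})\cdot\mathbf{n}(\overline{\mathbf{x}})|^2\right]d\mathbf{y}.$$ Then there exists $\overline{\delta}>0$ such that for all $0<\delta\le\overline{\delta}$, $Q_\delta$ is bounded from above and below independently of $\delta$; specifically there is a constant $C_q>0$ independent of $\delta$ such that $$0<\tfrac12-C_q\delta\le Q_\delta(\mathbf{x})\le \tfrac32+C_q\delta\qquad\text{for all }\mathbf{x}\in B\Omega_i.$$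
   Context: Kernel: $J_\delta(r)=\delta^{-4}J(r/\delta)$, where $J:[0,\infty)\to[0,\infty)$ is integrable, nonincreasing, strictly positive on $[0,1]$, vanishes on $(1,\infty)$, and satisfies $\int_{\mathbb{R}^2}J(|\mathbf{z}|)|\mathbf{z}|^2d\mathbf{z}=2$. The horizon $\delta>0$ is assumed small enough that every $\mathbf{x}\in\Omega_{nl}$ within distance $\delta$ of $\Gamma_i$ has a unique orthogonal projection $\overline{\mathbf{x}}$ onto $\Gamma_i$; $\mathbf{n}(\overline{\mathbf{x}})$ denotes the unit exterior normal to $\Omega_{nl}$ at $\overline{\mathbf{x}}$. $B\Omega_i:=\{\mathbf{x}\in\Omega_{nl}:\overline{\mathbf{x}}\in\Gamma_i,\ \mathrm{dist}(\mathbf{x},\Gamma_i)\le\delta\}$. *)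

theory Defs
  imports "HOL-Analysis.Analysis"
begin

definition admissible_kernel :: "(real \<Rightarrow> real) \<Rightarrow> bool" where
  "admissible_kernel J \<longleftrightarrow>
     (\<forall>r\<ge>0. J r \<ge> 0) \<and>
     J integrable_on {0..} \<and>
     (\<forall>r s. 0 \<le> r \<and> r \<le> s \<longrightarrow> J s \<le> J r) \<and>
     (\<forall>r. 0 \<le> r \<and> r \<le> 1 \<longrightarrow> J r > 0) \<and>
     (\<forall>r. r > 1 \<longrightarrow> J r = 0) \<and>
     ((\<lambda>z::real^2. J (norm z) * (norm z)^2) has_integral 2) UNIV"

definition J_delta :: "(real \<Rightarrow> real) \<Rightarrow> real \<Rightarrow> real \<Rightarrow> real" where
  "J_delta J \<delta> r = J (r / \<delta>) / \<delta> ^ 4"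

definition C3_boundary :: "(real^2) set \<Rightarrow> bool" where
  "C3_boundary \<Omega> \<longleftrightarrow>
     (\<exists>(\<gamma>::real \<Rightarrow> real^2) \<gamma>1 \<gamma>2 \<gamma>3 L. L > 0 \<and>
        (\<forall>t. \<gamma> (t + L) = \<gamma> t) \<and> inj_on \<gamma> {0..<L} \<and> \<gamma> ` {0..L} = frontier \<Omega> \<and>
        (\<forall>t. (\<gamma> has_vector_derivative \<gamma>1 t) (at t)) \<and>
        (\<forall>t. (\<gamma>1 has_vector_derivative \<gamma>2 t) (at t)) \<and>
        (\<forall>t. (\<gamma>2 has_vector_derivative \<gamma>3 t) (at t)) \<and>
        continuous_on UNIV \<gamma>3 \<and>
        (\<forall>t. \<gamma>1 t \<noteq> 0))"

definition boundary_curve :: "(real^2) set \<Rightarrow> (real^2) set \<Rightarrow> bool" where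
  "boundary_curve \<Omega> \<Gamma> \<longleftrightarrow> \<Gamma> \<subseteq> frontier \<Omega> \<and> (\<exists>g. path g \<and> path_image g = \<Gamma>)"

definition proj_bd :: "(real^2) set \<Rightarrow> real^2 \<Rightarrow> real^2" where
  "proj_bd \<Omega> x = (SOME p. p \<in> frontier \<Omega> \<and> dist x p = infdist x (frontier \<Omega>))"

definition is_ext_unit_normal :: "(real^2) set \<Rightarrow> real^2 \<Rightarrow> real^2 \<Rightarrow> bool" where
  "is_ext_unit_normal \<Omega> p \<nu> \<longleftrightarrow>
     norm \<nu> = 1 \<and>
     ((\<lambda>y. ((y - p) \<bullet> \<nu>) / norm (y - p)) \<longlongrightarrow> 0) (at p within frontier \<Omega>) \<and>
     (\<forall>\<^sub>F t in at_right 0. p + t *\<^sub>R \<nu> \<notin> closure \<Omega>)"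

definition ext_normal :: "(real^2) set \<Rightarrow> real^2 \<Rightarrow> real^2" where
  "ext_normal \<Omega> p = (THE \<nu>. is_ext_unit_normal \<Omega> p \<nu>)"

definition B_Omega :: "(real^2) set \<Rightarrow> (real^2) set \<Rightarrow> real \<Rightarrow> (real^2) set" where
  "B_Omega \<Omega> \<Gamma> \<delta> = {x \<in> \<Omega>. proj_bd \<Omega> x \<in> \<Gamma> \<and> infdist x \<Gamma> \<le> \<delta>}"

definition Q_delta :: "(real \<Rightarrow> real) \<Rightarrow> (real^2) set \<Rightarrow> real \<Rightarrow> real^2 \<Rightarrow> real" where
  "Q_delta J \<Omega> \<delta> x =
     (let xb = proj_bd \<Omega> x; n = ext_normal \<Omega> xb in
      1 - integral (UNIV - \<Omega>)
            (\<lambda>y. J_delta J \<delta> (norm (x - y)) *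
                 ((\<bar>(y - xb) \<bullet> n\<bar>)^2 - (\<bar>(x - xb) \<bullet> n\<bar>)^2)))"

end

(* Let p be the boundary point nearest to x, d = |x - p| <= delta and nu = (p - x) / d.
   By convexity, Omega lies in the open half-plane (z - p).nu < 0, and nu is the exterior
   normal at p.  The boundary is a closed regular C^2 curve, so it leaves its tangent lines
   at most quadratically, |(q - p).nu| <= K |q - p|^2; hence every exterior point y within
   delta of x satisfies (y - p).nu >= -4 K delta^2.  After the rotation y = x + R w taking
   the first axis to nu, the integrand of 1 - Q_delta becomes J_delta(|w|) (w1^2 - 2 d w1)
   on the exterior.  The exterior contains the half-plane w1 >= d, whose contribution is
   at most the integral of J_delta(|w|) max(w1, 0)^2, a quarter of the second moment 2.
   Inside the ball of radius delta the rest of the exterior lies in a strip of width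
   4 K delta^2, where the integrand is at most 3 J(0) / delta^2.  Together,
   |1 - Q_delta(x)| <= 1/2 + 24 K J(0) delta. *)

theory Submission
  imports Defs
begin

section \<open>Change of variables for real-valued integrands\<close>

lemma absolutely_integrable_bounded_support:
  fixes f :: "'a::euclidean_space \<Rightarrow> real"
  assumes f: "f \<in> borel_measurable lebesgue"
    and bound: "\<And>w. \<bar>f w\<bar> \<le> M * indicator (cball c R) w"
  shows "f absolutely_integrable_on UNIV"
proof (rule measurable_bounded_by_integrable_imp_absolutely_integrable)
  show "f \<in> borel_measurable (lebesgue_on UNIV)" using f by simp
  have "indicat_real (cball c R) integrable_on UNIV"
    using integrable_on_indicator[of "cball c R" UNIV] lmeasurable_cball by simp
  then show "(\<lambda>w. M * indicator (cball c R) w) integrable_on UNIV"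
    by (rule integrable_on_mult_right)
qed (use bound in auto)

lemma linear_change_of_variables_real:
  fixes f :: "real^'n::{finite,wellorder} \<Rightarrow> real" and g :: "real^'n::_ \<Rightarrow> real^'n::_"
  assumes g: "linear g" "bij g" and f: "f absolutely_integrable_on UNIV"
  shows "(\<lambda>w. f (c + g w)) absolutely_integrable_on UNIV"
    and "integral UNIV f = \<bar>det (matrix g)\<bar> * integral UNIV (\<lambda>w. f (c + g w))"
proof -
  \<comment> \<open>The library theorem is stated for vector-valued integrands, so we pass through \<open>real^1\<close>.\<close>
  let ?D = "\<bar>det (matrix g)\<bar>"
  let ?f1 = "\<lambda>y. vec (f y) :: real^1"
  have surj: "(\<lambda>w. c + g w) ` UNIV = UNIV"
  proof -
    have "y \<in> range (\<lambda>w. c + g w)" for y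
      using surjD[OF bij_is_surj[OF g(2)], of "y - c"] by (auto simp: algebra_simps)
    then show ?thesis by auto
  qed
  have inj: "inj (\<lambda>w. c + g w)"
    using g(2) by (auto simp: bij_def inj_on_def)
  have der: "((\<lambda>w. c + g w) has_derivative g) (at w within UNIV)" for w
    using g(1) by (auto intro!: derivative_eq_intros simp: linear_imp_has_derivative)
  have f1: "?f1 absolutely_integrable_on UNIV"
    using f absolutely_integrable_on_1_iff[where f="?f1"] by simp
  have "(\<lambda>w. ?D *\<^sub>R ?f1 (c + g w)) absolutely_integrable_on UNIV \<and>
      integral UNIV (\<lambda>w. ?D *\<^sub>R ?f1 (c + g w)) = integral UNIV ?f1 \<longleftrightarrow>
      ?f1 absolutely_integrable_on (\<lambda>w. c + g w) ` UNIV \<and>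
      integral ((\<lambda>w. c + g w) ` UNIV) ?f1 = integral UNIV ?f1"
    by (rule has_absolute_integral_change_of_variables) (use der inj in auto)
  then have "(\<lambda>w. ?D *\<^sub>R ?f1 (c + g w)) absolutely_integrable_on UNIV \<and>
      integral UNIV (\<lambda>w. ?D *\<^sub>R ?f1 (c + g w)) = integral UNIV ?f1"
    using f1 unfolding surj by blast
  moreover have "(\<lambda>w. ?D *\<^sub>R ?f1 (c + g w)) = (\<lambda>w. vec (?D * f (c + g w)))"
    by (simp add: vec_scaleR)
  ultimately have abs: "(\<lambda>w. ?D * f (c + g w)) absolutely_integrable_on UNIV"
    and int: "integral UNIV (\<lambda>w. ?D * f (c + g w)) = integral UNIV f"
    by (simp_all add: absolutely_integrable_on_1_iff integral_on_1_eq)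
  have "?D \<noteq> 0"
    using det_nz_iff_inj[OF g(1)] bij_is_inj[OF g(2)] by simp
  then show "(\<lambda>w. f (c + g w)) absolutely_integrable_on UNIV"
    using abs absolutely_integrable_on_scaleR_iff[where c="?D"] by simp
  show "integral UNIV f = ?D * integral UNIV (\<lambda>w. f (c + g w))"
    using int by simp
qed

lemma orthogonal_change_of_variables_real:
  fixes f :: "real^'n::{finite,wellorder} \<Rightarrow> real" and g :: "real^'n::_ \<Rightarrow> real^'n::_"
  assumes g: "orthogonal_transformation g" and f: "f absolutely_integrable_on UNIV"
  shows "(\<lambda>w. f (c + g w)) absolutely_integrable_on UNIV"
    and "integral UNIV (\<lambda>w. f (c + g w)) = integral UNIV f"
proof -
  have "\<bar>det (matrix g)\<bar> = 1"
    using det_orthogonal_matrix orthogonal_transformation_matrix g by fastforce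
  then show "(\<lambda>w. f (c + g w)) absolutely_integrable_on UNIV"
    and "integral UNIV (\<lambda>w. f (c + g w)) = integral UNIV f"
    using linear_change_of_variables_real[OF orthogonal_transformation_linear[OF g]
        orthogonal_transformation_bij[OF g] f, of c] by simp_all
qed

lemma absolutely_integrable_orthogonal_change_iff:
  fixes f :: "real^'n::{finite,wellorder} \<Rightarrow> real" and g :: "real^'n::_ \<Rightarrow> real^'n::_"
  assumes g: "orthogonal_transformation g"
  shows "(\<lambda>w. f (c + g w)) absolutely_integrable_on UNIV \<longleftrightarrow> f absolutely_integrable_on UNIV"
proof
  assume "(\<lambda>w. f (c + g w)) absolutely_integrable_on UNIV"
  then have "(\<lambda>y. f (c + g (- inv g c + inv g y))) absolutely_integrable_on UNIV"
    using orthogonal_change_of_variables_real(1)[OF orthogonal_transformation_inv[OF g]] by blast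
  moreover have "c + g (- inv g c + inv g y) = y" for y
  proof -
    have "g (inv g z) = z" for z
      using orthogonal_transformation_bij[OF g] by (simp add: bij_is_surj surj_f_inv_f)
    then show ?thesis
      using orthogonal_transformation_linear[OF g] by (simp add: linear_add linear_diff)
  qed
  ultimately show "f absolutely_integrable_on UNIV"
    by simp
qed (rule orthogonal_change_of_variables_real(1)[OF g])

lemma integral_orthogonal_change_on:
  fixes f :: "real^'n::{finite,wellorder} \<Rightarrow> real" and g :: "real^'n::_ \<Rightarrow> real^'n::_"
  assumes g: "orthogonal_transformation g"
    and "(\<lambda>w. if c + g w \<in> S then f (c + g w) else 0) absolutely_integrable_on UNIV"
  shows "integral S f = integral UNIV (\<lambda>w. if c + g w \<in> S then f (c + g w) else 0)"
proof -
  have "(\<lambda>y. if y \<in> S then f y else 0) absolutely_integrable_on UNIV"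
    using assms(2) absolutely_integrable_orthogonal_change_iff[OF g, of "\<lambda>y. if y \<in> S then f y else 0" c]
    by simp
  from orthogonal_change_of_variables_real(2)[OF g this, of c]
  show ?thesis
    by (simp add: integral_restrict_UNIV)
qed

lemma borel_measurable_lebesgueI:
  fixes f :: "'a::euclidean_space \<Rightarrow> real"
  assumes "f \<in> borel_measurable borel"
  shows "f \<in> borel_measurable lebesgue"
proof -
  have "f \<in> borel_measurable lborel"
    using assms by simp
  then show ?thesis
    using measurable_completion by blast
qed

lemma closed_imp_sets_lebesgue:
  fixes S :: "'a::euclidean_space set"
  shows "closed S \<Longrightarrow> S \<in> sets lebesgue"
  using borel_closed by (metis sets_completionI_sets sets_lborel)

section \<open>Vectors in the plane\<close>

lemma norm_real2_squared: "(norm (w::real^2))\<^sup>2 = (w$1)\<^sup>2 + (w$2)\<^sup>2"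
  unfolding power2_norm_eq_inner by (simp add: inner_vec_def sum_2 power2_eq_square)

lemma orthogonal_unit_vectors_real2:
  fixes v \<mu> \<nu> :: "real^2"
  assumes "v \<noteq> 0" and "\<mu> \<bullet> v = 0" "\<nu> \<bullet> v = 0" and "norm \<mu> = 1" "norm \<nu> = 1"
  shows "\<mu> = \<nu> \<or> \<mu> = - \<nu>"
proof -
  have orth: "\<mu>$1 * v$1 + \<mu>$2 * v$2 = 0" "\<nu>$1 * v$1 + \<nu>$2 * v$2 = 0"
    using assms(2,3) by (simp_all add: inner_vec_def sum_2)
  have "v$1 * (\<mu>$1 * \<nu>$2 - \<mu>$2 * \<nu>$1) = 0" "v$2 * (\<mu>$1 * \<nu>$2 - \<mu>$2 * \<nu>$1) = 0"
    using orth by algebra+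
  moreover have "v$1 \<noteq> 0 \<or> v$2 \<noteq> 0"
    using assms(1) by (simp add: vec_eq_iff forall_2)
  ultimately have cross: "\<mu>$1 * \<nu>$2 - \<mu>$2 * \<nu>$1 = 0"
    by auto
  have "(\<mu> \<bullet> \<nu>)\<^sup>2 + (\<mu>$1 * \<nu>$2 - \<mu>$2 * \<nu>$1)\<^sup>2 = (norm \<mu>)\<^sup>2 * (norm \<nu>)\<^sup>2"
    unfolding norm_real2_squared by (simp add: inner_vec_def sum_2 power2_eq_square algebra_simps)
  then have "\<mu> \<bullet> \<nu> = 1 \<or> \<mu> \<bullet> \<nu> = -1"
    using assms(4,5) cross by (simp add: power2_eq_1_iff)
  moreover have "(\<mu> - \<nu>) \<bullet> (\<mu> - \<nu>) = 2 - 2 * (\<mu> \<bullet> \<nu>)" "(\<mu> + \<nu>) \<bullet> (\<mu> + \<nu>) = 2 + 2 * (\<mu> \<bullet> \<nu>)"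
    using assms(4,5) by (simp_all add: inner_diff inner_add inner_commute[of \<nu> \<mu>] norm_eq_1)
  ultimately have "(\<mu> - \<nu>) \<bullet> (\<mu> - \<nu>) = 0 \<or> (\<mu> + \<nu>) \<bullet> (\<mu> + \<nu>) = 0"
    by auto
  then show ?thesis
    by (auto simp: eq_neg_iff_add_eq_0)
qed

lemma rotation_to_unit_vector:
  fixes \<nu> :: "real^2"
  assumes "norm \<nu> = 1"
  obtains R :: "real^2 \<Rightarrow> real^2" where "orthogonal_transformation R" "\<And>w. R w \<bullet> \<nu> = w$1"
proof -
  define R where "R w = ((\<chi> i. if i = 1 then \<nu>$1 * w$1 - \<nu>$2 * w$2 else \<nu>$2 * w$1 + \<nu>$1 * w$2) :: real^2)"
    for w :: "real^2"
  have R_components: "R w $ 1 = \<nu>$1 * w$1 - \<nu>$2 * w$2" "R w $ 2 = \<nu>$2 * w$1 + \<nu>$1 * w$2" for w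
    by (simp_all add: R_def)
  have unit: "(\<nu>$1)\<^sup>2 + (\<nu>$2)\<^sup>2 = 1"
    using assms norm_real2_squared[of \<nu>] by simp
  have "linear R"
    by (rule linearI) (simp_all add: vec_eq_iff forall_2 R_components algebra_simps)
  moreover have "(norm (R w))\<^sup>2 = (norm w)\<^sup>2" for w
  proof -
    have "(norm (R w))\<^sup>2 = ((\<nu>$1)\<^sup>2 + (\<nu>$2)\<^sup>2) * ((w$1)\<^sup>2 + (w$2)\<^sup>2)"
      unfolding norm_real2_squared R_components by (simp add: power2_eq_square algebra_simps)
    then show ?thesis
      using unit by (simp add: norm_real2_squared)
  qed
  ultimately have "orthogonal_transformation R"
    by (simp add: orthogonal_transformation)
  moreover have "R w \<bullet> \<nu> = w$1" for w
  proof -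
    have "R w \<bullet> \<nu> = w$1 * ((\<nu>$1)\<^sup>2 + (\<nu>$2)\<^sup>2)"
      by (simp add: inner_vec_def sum_2 R_components power2_eq_square algebra_simps)
    then show ?thesis
      using unit by simp
  qed
  ultimately show thesis
    by (rule that)
qed

lemma first_coordinate_quadratic_bound:
  fixes w :: "real^2"
  assumes "norm w \<le> \<delta>" "0 \<le> d" "d \<le> \<delta>"
  shows "\<bar>(w$1)\<^sup>2 - 2 * d * w$1\<bar> \<le> 3 * \<delta>\<^sup>2"
proof -
  have "\<bar>w$1\<bar> \<le> \<delta>"
    using component_le_norm_cart[of w 1] assms(1) by linarith
  have "\<bar>(w$1)\<^sup>2 - 2 * d * w$1\<bar> \<le> \<bar>w$1\<bar>\<^sup>2 + 2 * d * \<bar>w$1\<bar>"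
    using abs_triangle_ineq4[of "(w$1)\<^sup>2" "2 * d * w$1"] \<open>0 \<le> d\<close> by (simp add: abs_mult)
  also have "\<dots> \<le> \<delta>\<^sup>2 + 2 * \<delta> * \<delta>"
    using \<open>\<bar>w$1\<bar> \<le> \<delta>\<close> assms(2,3) by (intro add_mono mult_mono power_mono) auto
  finally show ?thesis
    by (simp add: power2_eq_square)
qed

section \<open>Closed regular curves\<close>

lemma second_order_taylor_bound:
  fixes \<gamma> :: "real \<Rightarrow> 'a::real_normed_vector"
  assumes d1: "\<And>t. (\<gamma> has_vector_derivative \<gamma>' t) (at t)"
    and d2: "\<And>t. (\<gamma>' has_vector_derivative \<gamma>'' t) (at t)"
    and I: "is_interval I" and M: "\<And>t. t \<in> I \<Longrightarrow> norm (\<gamma>'' t) \<le> M"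
    and s: "s \<in> I" and t: "t \<in> I"
  shows "norm (\<gamma> t - \<gamma> s - (t - s) *\<^sub>R \<gamma>' s) \<le> M * (t - s)\<^sup>2"
proof -
  define S where "S = closed_segment s t"
  have "convex S" "s \<in> S" "S \<subseteq> I"
    using I s t closed_segment_subset is_interval_convex by (auto simp: S_def)
  have slope: "norm (\<gamma>' x - \<gamma>' s) \<le> M * \<bar>t - s\<bar>" if "x \<in> S" for x
  proof -
    have "(\<gamma>' has_derivative (\<lambda>h. h *\<^sub>R \<gamma>'' y)) (at y within S)" for y
      using d2 has_vector_derivative_at_within unfolding has_vector_derivative_def by blast
    moreover have "onorm (\<lambda>h. h *\<^sub>R \<gamma>'' y) \<le> M" if "y \<in> S" for y
      using M[of y] \<open>S \<subseteq> I\<close> that onorm_scaleR_left[OF bounded_linear_ident, of "\<gamma>'' y"]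
      by (auto simp: onorm_id)
    ultimately have "norm (\<gamma>' x - \<gamma>' s) \<le> M * norm (x - s)"
      by (intro differentiable_bound[OF \<open>convex S\<close>, of \<gamma>' "\<lambda>y h. h *\<^sub>R \<gamma>'' y"])
        (use that \<open>s \<in> S\<close> in auto)
    moreover have "\<bar>x - s\<bar> \<le> \<bar>t - s\<bar>"
      using that by (auto simp: S_def closed_segment_eq_real_ivl split: if_splits)
    moreover have "0 \<le> M"
      using M[OF s] norm_ge_zero order_trans by blast
    ultimately show ?thesis
      by (smt (verit) mult_left_mono real_norm_def)
  qed
  have "norm (\<gamma> t - \<gamma> s - (t - s) *\<^sub>R \<gamma>' s) \<le> norm (t - s) * (M * \<bar>t - s\<bar>)"
    using has_vector_derivative_at_within[OF d1] slope \<open>s \<in> S\<close>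
    by (intro vector_differentiable_bound_linearization[where S=S]) (auto simp: S_def)
  then show ?thesis
    by (simp add: power2_eq_square mult.commute mult.left_commute)
qed

lemma periodic_int_shift:
  fixes \<gamma> :: "real \<Rightarrow> 'a"
  assumes per: "\<And>t. \<gamma> (t + L) = \<gamma> t"
  shows "\<gamma> (t + of_int k * L) = \<gamma> t"
proof (induction k rule: int_induct[where k=0])
  case (step1 i)
  then show ?case
    using per[of "t + of_int i * L"] by (simp add: algebra_simps)
next
  case (step2 i)
  then show ?case
    using per[of "t + of_int (i - 1) * L"] by (simp add: algebra_simps)
qed simp

lemma periodic_range:
  fixes \<gamma> :: "real \<Rightarrow> 'a"
  assumes per: "\<And>t. \<gamma> (t + L) = \<gamma> t" and "0 < L"
  shows "range \<gamma> = \<gamma> ` {0..L}"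
proof -
  have "\<gamma> t \<in> \<gamma> ` {0..L}" for t
  proof
    define k where "k = \<lfloor>t / L\<rfloor>"
    have "of_int k * L \<le> t" "t \<le> (of_int k + 1) * L"
      using \<open>0 < L\<close> floor_divide_lower[of L t] floor_divide_upper[of L t] by (auto simp: k_def)
    then show "t - of_int k * L \<in> {0..L}"
      by (auto simp: algebra_simps)
    show "\<gamma> t = \<gamma> (t - of_int k * L)"
      using periodic_int_shift[of \<gamma> L, OF per, of "t - of_int k * L" k] by simp
  qed
  then show ?thesis
    by auto
qed

lemma difference_quotient_tendsto_at_right:
  assumes "(\<gamma> has_vector_derivative v) (at t)"
  shows "((\<lambda>s. (\<gamma> s - \<gamma> t) /\<^sub>R (s - t)) \<longlongrightarrow> v) (at_right t)"
proof -
  have "((\<lambda>s. (1 / norm (s - t)) *\<^sub>R (\<gamma> s - (\<gamma> t + (s - t) *\<^sub>R v))) \<longlongrightarrow> 0) (at t)"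
    using assms unfolding has_vector_derivative_def has_derivative_within by simp
  then have "((\<lambda>s. (1 / norm (s - t)) *\<^sub>R (\<gamma> s - (\<gamma> t + (s - t) *\<^sub>R v))) \<longlongrightarrow> 0) (at_right t)"
    by (rule tendsto_mono[OF at_within_le_at])
  moreover have "(1 / norm (s - t)) *\<^sub>R (\<gamma> s - (\<gamma> t + (s - t) *\<^sub>R v)) =
      (\<gamma> s - \<gamma> t) /\<^sub>R (s - t) - v" if "t < s" for s
    using that by (simp add: scaleR_diff_right scaleR_add_right inverse_eq_divide)
  then have "\<forall>\<^sub>F s in at_right t.
      (1 / norm (s - t)) *\<^sub>R (\<gamma> s - (\<gamma> t + (s - t) *\<^sub>R v)) = (\<gamma> s - \<gamma> t) /\<^sub>R (s - t) - v"
    using eventually_at_right_less by (rule eventually_mono[rotated]) simp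
  ultimately have "((\<lambda>s. (\<gamma> s - \<gamma> t) /\<^sub>R (s - t) - v) \<longlongrightarrow> 0) (at_right t)"
    by (rule Lim_transform_eventually)
  then show ?thesis
    by (simp add: Lim_null[symmetric])
qed

lemma velocity_orthogonal_to_normal_limit:
  fixes \<gamma> :: "real \<Rightarrow> 'a::real_inner"
  assumes \<gamma>: "(\<gamma> has_vector_derivative v) (at t)" and "v \<noteq> 0" and "range \<gamma> \<subseteq> S"
    and \<mu>: "((\<lambda>y. ((y - \<gamma> t) \<bullet> \<mu>) / norm (y - \<gamma> t)) \<longlongrightarrow> 0) (at (\<gamma> t) within S)"
  shows "\<mu> \<bullet> v = 0"
proof -
  define D where "D s = (\<gamma> s - \<gamma> t) /\<^sub>R (s - t)" for s
  have D: "(D \<longlongrightarrow> v) (at_right t)"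
    unfolding D_def by (rule difference_quotient_tendsto_at_right[OF \<gamma>])
  have "\<forall>\<^sub>F s in at_right t. D s \<noteq> 0"
    using tendsto_imp_eventually_ne[OF D \<open>v \<noteq> 0\<close>] .
  then have "\<forall>\<^sub>F s in at_right t. \<gamma> s \<in> S - {\<gamma> t}"
    using assms(3) by (auto elim!: eventually_mono simp: D_def)
  moreover have "(\<gamma> \<longlongrightarrow> \<gamma> t) (at_right t)"
    using has_vector_derivative_continuous[OF \<gamma>] tendsto_mono[OF at_within_le_at]
    by (auto simp: continuous_at)
  ultimately have "filterlim \<gamma> (at (\<gamma> t) within S) (at_right t)"
    by (intro filterlim_at_withinI)
  from filterlim_compose[OF \<mu> this]
  have "((\<lambda>s. ((\<gamma> s - \<gamma> t) \<bullet> \<mu>) / norm (\<gamma> s - \<gamma> t)) \<longlongrightarrow> 0) (at_right t)" .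
  moreover have "((\<gamma> s - \<gamma> t) \<bullet> \<mu>) / norm (\<gamma> s - \<gamma> t) = (D s \<bullet> \<mu>) / norm (D s)" if "t < s" for s
    using that by (simp add: D_def)
  then have "\<forall>\<^sub>F s in at_right t.
      ((\<gamma> s - \<gamma> t) \<bullet> \<mu>) / norm (\<gamma> s - \<gamma> t) = (D s \<bullet> \<mu>) / norm (D s)"
    using eventually_at_right_less by (rule eventually_mono[rotated]) simp
  ultimately have "((\<lambda>s. (D s \<bullet> \<mu>) / norm (D s)) \<longlongrightarrow> 0) (at_right t)"
    by (rule Lim_transform_eventually)
  moreover have "((\<lambda>s. (D s \<bullet> \<mu>) / norm (D s)) \<longlongrightarrow> (v \<bullet> \<mu>) / norm v) (at_right t)"
    using D \<open>v \<noteq> 0\<close> by (intro tendsto_intros) auto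
  ultimately have "(v \<bullet> \<mu>) / norm v = 0"
    using tendsto_unique trivial_limit_at_right_real by blast
  then show ?thesis
    using \<open>v \<noteq> 0\<close> by (simp add: inner_commute)
qed

lemma periodic_curve_separation:
  fixes \<gamma> :: "real \<Rightarrow> 'a::metric_space"
  assumes cont: "continuous_on {0..L} \<gamma>" and inj: "inj_on \<gamma> {0..<L}" and closed: "\<gamma> L = \<gamma> 0"
    and "0 < \<eta>"
  obtains r where "0 < r"
    "\<And>a b. a \<in> {0..L} \<Longrightarrow> b \<in> {0..L} \<Longrightarrow> dist (\<gamma> a) (\<gamma> b) < r \<Longrightarrow>
       \<bar>a - b\<bar> < \<eta> \<or> L - \<eta> < \<bar>a - b\<bar>"
proof -
  define P where "P = ({0..L} \<times> {0..L}) \<inter> {z. \<eta> \<le> \<bar>fst z - snd z\<bar> \<and> \<bar>fst z - snd z\<bar> \<le> L - \<eta>}"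
  have "compact P"
    unfolding P_def Collect_conj_eq
    by (intro compact_Int_closed compact_Times compact_Icc closed_Int closed_Collect_le continuous_intros)
  have apart: "\<gamma> a \<noteq> \<gamma> b" if "(a, b) \<in> P" for a b
  proof
    assume "\<gamma> a = \<gamma> b"
    define a' where "a' = (if a = L then 0 else a)"
    define b' where "b' = (if b = L then 0 else b)"
    have "a' \<in> {0..<L}" "b' \<in> {0..<L}" "\<gamma> a' = \<gamma> b'"
      using that \<open>\<gamma> a = \<gamma> b\<close> closed \<open>0 < \<eta>\<close> by (auto simp: P_def a'_def b'_def)
    then have "a' = b'"
      using inj by (auto dest: inj_onD)
    then show False
      using that \<open>0 < \<eta>\<close> by (auto simp: P_def a'_def b'_def split: if_splits)
  qed
  show ?thesis
  proof (cases "P = {}")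
    case True
    have "\<bar>a - b\<bar> < \<eta> \<or> L - \<eta> < \<bar>a - b\<bar>" if "a \<in> {0..L}" "b \<in> {0..L}" for a b
      using True that by (force simp: P_def)
    then show ?thesis
      by (intro that[of 1]) auto
  next
    case False
    have "continuous_on P (\<lambda>z. dist (\<gamma> (fst z)) (\<gamma> (snd z)))"
      using cont by (intro continuous_intros continuous_on_compose2[OF cont]) (auto simp: P_def)
    then obtain z where "z \<in> P" and z: "\<And>y. y \<in> P \<Longrightarrow> dist (\<gamma> (fst z)) (\<gamma> (snd z)) \<le> dist (\<gamma> (fst y)) (\<gamma> (snd y))"
      using continuous_attains_inf[OF \<open>compact P\<close> False] by blast
    show ?thesis
    proof (rule that)
      show "0 < dist (\<gamma> (fst z)) (\<gamma> (snd z))"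
        using apart[of "fst z" "snd z"] \<open>z \<in> P\<close> by simp
      show "\<bar>a - b\<bar> < \<eta> \<or> L - \<eta> < \<bar>a - b\<bar>"
        if "a \<in> {0..L}" "b \<in> {0..L}" "dist (\<gamma> a) (\<gamma> b) < dist (\<gamma> (fst z)) (\<gamma> (snd z))" for a b
        using that z[of "(a, b)"] by (force simp: P_def)
    qed
  qed
qed

lemma regular_curve_locally_flat:
  fixes \<gamma> :: "real \<Rightarrow> 'a::real_inner"
  assumes d1: "\<And>t. (\<gamma> has_vector_derivative \<gamma>' t) (at t)"
    and d2: "\<And>t. (\<gamma>' has_vector_derivative \<gamma>'' t) (at t)"
    and cont: "continuous_on {a..b} \<gamma>''" and regular: "\<And>t. \<gamma>' t \<noteq> 0"
  obtains \<eta> K where "0 < \<eta>" "0 < K"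
    "\<And>s t \<nu>. s \<in> {a..b} \<Longrightarrow> t \<in> {a..b} \<Longrightarrow> \<bar>t - s\<bar> \<le> \<eta> \<Longrightarrow> norm \<nu> = 1 \<Longrightarrow> \<nu> \<bullet> \<gamma>' s = 0 \<Longrightarrow>
       \<bar>(\<gamma> t - \<gamma> s) \<bullet> \<nu>\<bar> \<le> K * (norm (\<gamma> t - \<gamma> s))\<^sup>2"
proof (cases "a \<le> b")
  case False
  then show ?thesis
    by (intro that[of 1 1]) auto
next
  case True
  have "continuous_on {a..b} (\<lambda>s. norm (\<gamma>' s))"
    using d2 has_vector_derivative_continuous
    by (intro continuous_on_norm continuous_at_imp_continuous_on) blast
  then obtain s0 where "s0 \<in> {a..b}" and s0: "\<And>s. s \<in> {a..b} \<Longrightarrow> norm (\<gamma>' s0) \<le> norm (\<gamma>' s)"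
    using continuous_attains_inf[of "{a..b}" "\<lambda>s. norm (\<gamma>' s)"] True by auto
  define m where "m = norm (\<gamma>' s0)"
  have "0 < m"
    using regular by (simp add: m_def)
  obtain M where "0 < M" and M: "\<And>s. s \<in> {a..b} \<Longrightarrow> norm (\<gamma>'' s) \<le> M"
    using compact_imp_bounded[OF compact_continuous_image[OF cont compact_Icc]]
    unfolding bounded_pos by auto
  show ?thesis
  proof (rule that)
    show "0 < m / (2 * M)" "0 < 4 * M / m\<^sup>2"
      using \<open>0 < m\<close> \<open>0 < M\<close> by auto
    fix s t \<nu>
    assume s: "s \<in> {a..b}" and t: "t \<in> {a..b}" and near: "\<bar>t - s\<bar> \<le> m / (2 * M)"
      and \<nu>: "norm \<nu> = 1" "\<nu> \<bullet> \<gamma>' s = 0"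
    define e where "e = \<gamma> t - \<gamma> s - (t - s) *\<^sub>R \<gamma>' s"
    have e: "norm e \<le> M * (t - s)\<^sup>2"
      unfolding e_def by (rule second_order_taylor_bound[OF d1 d2 is_interval_cc M s t])
    also have "\<dots> = (M * \<bar>t - s\<bar>) * \<bar>t - s\<bar>"
      by (simp add: power2_eq_square)
    also have "\<dots> \<le> m / 2 * \<bar>t - s\<bar>"
      using near \<open>0 < M\<close> by (intro mult_right_mono) (auto simp: field_simps)
    finally have small: "norm e \<le> m / 2 * \<bar>t - s\<bar>" .
    have "m * \<bar>t - s\<bar> \<le> norm ((t - s) *\<^sub>R \<gamma>' s)"
      using s0[OF s] by (simp add: m_def mult.commute mult_right_mono)
    also have "\<dots> \<le> norm (\<gamma> t - \<gamma> s) + norm e"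
      using norm_triangle_ineq4[of "\<gamma> t - \<gamma> s" e] by (simp add: e_def)
    finally have lower: "m / 2 * \<bar>t - s\<bar> \<le> norm (\<gamma> t - \<gamma> s)"
      using small by simp
    have "\<bar>(\<gamma> t - \<gamma> s) \<bullet> \<nu>\<bar> = \<bar>e \<bullet> \<nu>\<bar>"
      using \<nu>(2) by (simp add: e_def inner_diff_left inner_commute[of "\<gamma>' s"])
    also have "\<dots> \<le> norm e"
      using Cauchy_Schwarz_ineq2[of e \<nu>] \<nu>(1) by simp
    also have "\<dots> \<le> 4 * M / m\<^sup>2 * (m / 2 * \<bar>t - s\<bar>)\<^sup>2"
      using e \<open>0 < m\<close> by (simp add: power_mult_distrib power_divide)
    also have "\<dots> \<le> 4 * M / m\<^sup>2 * (norm (\<gamma> t - \<gamma> s))\<^sup>2"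
      using lower \<open>0 < m\<close> \<open>0 < M\<close> by (intro mult_left_mono power_mono) auto
    finally show "\<bar>(\<gamma> t - \<gamma> s) \<bullet> \<nu>\<bar> \<le> 4 * M / m\<^sup>2 * (norm (\<gamma> t - \<gamma> s))\<^sup>2" .
  qed
qed

definition normal_to_frontier :: "'a::real_inner set \<Rightarrow> 'a \<Rightarrow> 'a \<Rightarrow> bool" where
  "normal_to_frontier \<Omega> p \<mu> \<longleftrightarrow> ((\<lambda>y. ((y - p) \<bullet> \<mu>) / norm (y - p)) \<longlongrightarrow> 0) (at p within frontier \<Omega>)"

text \<open>This is all that the estimate uses of the \<open>C\<^sup>3\<close> regularity of the boundary.\<close>

definition uniformly_flat_frontier :: "'a::real_inner set \<Rightarrow> real \<Rightarrow> real \<Rightarrow> bool" where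
  "uniformly_flat_frontier \<Omega> r K \<longleftrightarrow>
     (\<forall>p\<in>frontier \<Omega>. \<exists>v. v \<noteq> 0 \<and> (\<forall>\<mu>. normal_to_frontier \<Omega> p \<mu> \<longrightarrow> \<mu> \<bullet> v = 0) \<and>
        (\<forall>\<nu> q. norm \<nu> = 1 \<longrightarrow> \<nu> \<bullet> v = 0 \<longrightarrow> q \<in> frontier \<Omega> \<longrightarrow> dist q p < r \<longrightarrow>
           \<bar>(q - p) \<bullet> \<nu>\<bar> \<le> K * (dist q p)\<^sup>2))"

lemma closed_regular_curve_flat:
  fixes \<gamma> :: "real \<Rightarrow> 'a::real_inner"
  assumes "0 < L" and per: "\<And>t. \<gamma> (t + L) = \<gamma> t" and inj: "inj_on \<gamma> {0..<L}"
    and d1: "\<And>t. (\<gamma> has_vector_derivative \<gamma>' t) (at t)"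
    and d2: "\<And>t. (\<gamma>' has_vector_derivative \<gamma>'' t) (at t)"
    and cont: "continuous_on UNIV \<gamma>''" and regular: "\<And>t. \<gamma>' t \<noteq> 0"
  obtains r K where "0 < r" "0 < K"
    "\<And>s t \<nu>. s \<in> {0..L} \<Longrightarrow> t \<in> {0..L} \<Longrightarrow> dist (\<gamma> t) (\<gamma> s) < r \<Longrightarrow> norm \<nu> = 1 \<Longrightarrow>
       \<nu> \<bullet> \<gamma>' s = 0 \<Longrightarrow> \<bar>(\<gamma> t - \<gamma> s) \<bullet> \<nu>\<bar> \<le> K * (dist (\<gamma> t) (\<gamma> s))\<^sup>2"
proof -
  obtain \<eta> K where "0 < \<eta>" "0 < K" and flat: "\<And>s t \<nu>. s \<in> {-L..2*L} \<Longrightarrow> t \<in> {-L..2*L} \<Longrightarrow>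
      \<bar>t - s\<bar> \<le> \<eta> \<Longrightarrow> norm \<nu> = 1 \<Longrightarrow> \<nu> \<bullet> \<gamma>' s = 0 \<Longrightarrow>
      \<bar>(\<gamma> t - \<gamma> s) \<bullet> \<nu>\<bar> \<le> K * (norm (\<gamma> t - \<gamma> s))\<^sup>2"
    using regular_curve_locally_flat[OF d1 d2 continuous_on_subset[OF cont] regular] by blast
  define \<eta>' where "\<eta>' = min \<eta> L"
  have "continuous_on {0..L} \<gamma>"
    using d1 by (meson continuous_at_imp_continuous_on has_vector_derivative_continuous)
  moreover have "\<gamma> L = \<gamma> 0"
    using per[of 0] by simp
  moreover have "0 < \<eta>'"
    using \<open>0 < \<eta>\<close> \<open>0 < L\<close> by (simp add: \<eta>'_def)
  ultimately obtain r where "0 < r" and separated: "\<And>a b. a \<in> {0..L} \<Longrightarrow> b \<in> {0..L} \<Longrightarrow>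
      dist (\<gamma> a) (\<gamma> b) < r \<Longrightarrow> \<bar>a - b\<bar> < \<eta>' \<or> L - \<eta>' < \<bar>a - b\<bar>"
    using periodic_curve_separation[OF _ inj] by metis
  show ?thesis
  proof (rule that[OF \<open>0 < r\<close> \<open>0 < K\<close>])
    fix s t \<nu>
    assume s: "s \<in> {0..L}" and t: "t \<in> {0..L}" and near: "dist (\<gamma> t) (\<gamma> s) < r"
      and \<nu>: "norm \<nu> = 1" "\<nu> \<bullet> \<gamma>' s = 0"
    have "\<bar>t - s\<bar> < \<eta>' \<or> L - \<eta>' < \<bar>t - s\<bar>"
      using separated[OF t s near] .
    moreover have "\<gamma> (t - L) = \<gamma> t" "\<gamma> (t + L) = \<gamma> t"
      using per[of "t - L"] per[of t] by simp_all
    ultimately obtain t' where "\<gamma> t' = \<gamma> t" "\<bar>t' - s\<bar> \<le> \<eta>'"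
      using s t by (smt (verit) atLeastAtMost_iff)
    moreover from this have "t' \<in> {-L..2*L}" "\<bar>t' - s\<bar> \<le> \<eta>"
      using s by (auto simp: \<eta>'_def)
    ultimately show "\<bar>(\<gamma> t - \<gamma> s) \<bullet> \<nu>\<bar> \<le> K * (dist (\<gamma> t) (\<gamma> s))\<^sup>2"
      using flat[of s t' \<nu>] \<nu> s by (simp add: dist_norm)
  qed
qed

lemma C3_boundary_uniformly_flat:
  assumes "C3_boundary \<Omega>"
  obtains r K where "0 < r" "0 < K" "uniformly_flat_frontier \<Omega> r K"
proof -
  obtain \<gamma> :: "real \<Rightarrow> real^2" and \<gamma>1 \<gamma>2 \<gamma>3 L where "0 < L" and per: "\<And>t. \<gamma> (t + L) = \<gamma> t"
    and inj: "inj_on \<gamma> {0..<L}" and img: "\<gamma> ` {0..L} = frontier \<Omega>"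
    and d1: "\<And>t. (\<gamma> has_vector_derivative \<gamma>1 t) (at t)"
    and d2: "\<And>t. (\<gamma>1 has_vector_derivative \<gamma>2 t) (at t)"
    and d3: "\<And>t. (\<gamma>2 has_vector_derivative \<gamma>3 t) (at t)"
    and regular: "\<And>t. \<gamma>1 t \<noteq> 0"
    using assms unfolding C3_boundary_def by blast
  have "continuous_on UNIV \<gamma>2"
    using d3 by (meson continuous_at_imp_continuous_on has_vector_derivative_continuous)
  then obtain r K where "0 < r" "0 < K" and flat: "\<And>s t \<nu>. s \<in> {0..L} \<Longrightarrow> t \<in> {0..L} \<Longrightarrow>
      dist (\<gamma> t) (\<gamma> s) < r \<Longrightarrow> norm \<nu> = 1 \<Longrightarrow> \<nu> \<bullet> \<gamma>1 s = 0 \<Longrightarrow>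
      \<bar>(\<gamma> t - \<gamma> s) \<bullet> \<nu>\<bar> \<le> K * (dist (\<gamma> t) (\<gamma> s))\<^sup>2"
    using closed_regular_curve_flat[OF \<open>0 < L\<close> per inj d1 d2 _ regular] by blast
  have "range \<gamma> = frontier \<Omega>"
    using periodic_range[of \<gamma> L, OF per \<open>0 < L\<close>] img by simp
  have "uniformly_flat_frontier \<Omega> r K"
    unfolding uniformly_flat_frontier_def
  proof
    fix p
    assume "p \<in> frontier \<Omega>"
    then obtain s where s: "s \<in> {0..L}" "p = \<gamma> s"
      using img by (metis imageE)
    have "\<mu> \<bullet> \<gamma>1 s = 0" if "normal_to_frontier \<Omega> p \<mu>" for \<mu>
      using velocity_orthogonal_to_normal_limit[OF d1 regular] that \<open>range \<gamma> = frontier \<Omega>\<close> s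
      unfolding normal_to_frontier_def by blast
    moreover have "\<bar>(q - p) \<bullet> \<nu>\<bar> \<le> K * (dist q p)\<^sup>2"
      if "norm \<nu> = 1" "\<nu> \<bullet> \<gamma>1 s = 0" "q \<in> frontier \<Omega>" "dist q p < r" for \<nu> q
    proof -
      obtain t where "t \<in> {0..L}" "q = \<gamma> t"
        using img \<open>q \<in> frontier \<Omega>\<close> by (metis imageE)
      then show ?thesis
        using flat[OF s(1) _ _ that(1,2)] \<open>dist q p < r\<close> s(2) by simp
    qed
    ultimately show "\<exists>v. v \<noteq> 0 \<and> (\<forall>\<mu>. normal_to_frontier \<Omega> p \<mu> \<longrightarrow> \<mu> \<bullet> v = 0) \<and>
        (\<forall>\<nu> q. norm \<nu> = 1 \<longrightarrow> \<nu> \<bullet> v = 0 \<longrightarrow> q \<in> frontier \<Omega> \<longrightarrow> dist q p < r \<longrightarrow>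
           \<bar>(q - p) \<bullet> \<nu>\<bar> \<le> K * (dist q p)\<^sup>2)"
      using regular by blast
  qed
  then show ?thesis
    using \<open>0 < r\<close> \<open>0 < K\<close> that by blast
qed

section \<open>The nearest boundary point\<close>

lemma proj_bd_nearest:
  assumes "open \<Omega>" "x \<in> \<Omega>" "frontier \<Omega> \<noteq> {}"
  shows "proj_bd \<Omega> x \<in> frontier \<Omega>" and "dist x (proj_bd \<Omega> x) = infdist x (frontier \<Omega>)"
    and "0 < dist x (proj_bd \<Omega> x)" and "ball x (dist x (proj_bd \<Omega> x)) \<subseteq> \<Omega>"
proof -
  have "\<exists>p. p \<in> frontier \<Omega> \<and> dist x p = infdist x (frontier \<Omega>)"
    using infdist_attains_inf[OF frontier_closed assms(3), of x] by metis
  then show p: "proj_bd \<Omega> x \<in> frontier \<Omega>" "dist x (proj_bd \<Omega> x) = infdist x (frontier \<Omega>)"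
    unfolding proj_bd_def by (metis (mono_tags, lifting) someI_ex)+
  have "x \<notin> frontier \<Omega>"
    using assms(1,2) by (simp add: frontier_def interior_open)
  then show "0 < dist x (proj_bd \<Omega> x)"
    using p(1) by (metis dist_pos_lt)
  show "ball x (dist x (proj_bd \<Omega> x)) \<subseteq> \<Omega>"
  proof
    fix z
    assume z: "z \<in> ball x (dist x (proj_bd \<Omega> x))"
    show "z \<in> \<Omega>"
    proof (rule ccontr)
      assume "z \<notin> \<Omega>"
      moreover have "x \<in> ball x (dist x (proj_bd \<Omega> x))"
        using \<open>0 < dist x (proj_bd \<Omega> x)\<close> by simp
      ultimately have "ball x (dist x (proj_bd \<Omega> x)) \<inter> frontier \<Omega> \<noteq> {}"
        using z assms(2) by (intro connected_Int_frontier) blast+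
      then obtain q where "q \<in> frontier \<Omega>" "dist x q < dist x (proj_bd \<Omega> x)"
        by auto
      then show False
        using infdist_le[of q "frontier \<Omega>" x] p(2) by simp
    qed
  qed
qed

lemma nearest_point_halfplane:
  fixes \<Omega> :: "'a::euclidean_space set"
  assumes "open \<Omega>" "convex \<Omega>" and p: "p \<notin> \<Omega>" and "0 < d" and ball: "ball x d \<subseteq> \<Omega>"
    and \<nu>: "p - x = d *\<^sub>R \<nu>" "norm \<nu> = 1"
  shows "\<And>z. z \<in> \<Omega> \<Longrightarrow> (z - p) \<bullet> \<nu> < 0"
proof -
  have "0 \<notin> (\<lambda>z. z - p) ` \<Omega>"
    using p by auto
  then obtain a where "a \<noteq> 0" and a: "\<forall>y\<in>(\<lambda>z. z - p) ` \<Omega>. 0 \<le> a \<bullet> y"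
    using separating_hyperplane_set_0[OF convex_translation_subtract[OF assms(2)]] by blast
  define w where "w = - a"
  have "w \<noteq> 0" and w: "\<And>z. z \<in> \<Omega> \<Longrightarrow> w \<bullet> (z - p) \<le> 0"
    using \<open>a \<noteq> 0\<close> a by (auto simp: w_def)
  have "closure \<Omega> \<subseteq> {z. w \<bullet> (z - p) \<le> 0}"
    by (rule closure_minimal) (use w in \<open>auto intro!: closed_Collect_le continuous_intros\<close>)
  moreover have "x + d *\<^sub>R (w /\<^sub>R norm w) \<in> closure \<Omega>"
    using closure_mono[OF ball] \<open>0 < d\<close> \<open>w \<noteq> 0\<close> by (auto simp: dist_norm)
  ultimately have "w \<bullet> (x + d *\<^sub>R (w /\<^sub>R norm w) - p) \<le> 0"
    by blast
  moreover have "w \<bullet> (d *\<^sub>R (w /\<^sub>R norm w)) = d * norm w"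
    using \<open>w \<noteq> 0\<close> by (simp add: power2_norm_eq_inner[symmetric] power2_eq_square)
  moreover have "w \<bullet> (x - p) = - d * (w \<bullet> \<nu>)"
    using \<nu>(1) by (metis inner_minus_right inner_scaleR_right minus_diff_eq mult_minus_left)
  moreover have "w \<bullet> (x + d *\<^sub>R (w /\<^sub>R norm w) - p) = w \<bullet> (x - p) + w \<bullet> (d *\<^sub>R (w /\<^sub>R norm w))"
    by (simp add: inner_add_right inner_diff_right)
  ultimately have "d * norm w \<le> d * (w \<bullet> \<nu>)"
    by linarith
  then have "norm w \<le> w \<bullet> \<nu>"
    using \<open>0 < d\<close> by simp
  then have w_parallel: "norm w *\<^sub>R \<nu> = w"
    using norm_cauchy_schwarz[of w \<nu>] norm_cauchy_schwarz_eq[of w \<nu>] \<nu>(2) by simp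
  have le: "(z - p) \<bullet> \<nu> \<le> 0" if "z \<in> \<Omega>" for z
  proof -
    have "norm w * ((z - p) \<bullet> \<nu>) = w \<bullet> (z - p)"
      using arg_cong[OF w_parallel, of "\<lambda>u. u \<bullet> (z - p)"] by (simp add: inner_commute)
    then have "norm w * ((z - p) \<bullet> \<nu>) \<le> 0"
      using w[OF that] by simp
    then show ?thesis
      using \<open>w \<noteq> 0\<close> by (simp add: mult_le_0_iff)
  qed
  show "(z - p) \<bullet> \<nu> < 0" if z: "z \<in> \<Omega>" for z
  proof -
    obtain e where "0 < e" "ball z e \<subseteq> \<Omega>"
      using assms(1) z openE by blast
    moreover have "z + (e / 2) *\<^sub>R \<nu> \<in> ball z e"
      using \<open>0 < e\<close> \<nu>(2) by (simp add: dist_norm)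
    ultimately have "(z + (e / 2) *\<^sub>R \<nu> - p) \<bullet> \<nu> \<le> 0"
      using le by blast
    then show ?thesis
      using \<open>0 < e\<close> \<nu>(2) by (simp add: inner_diff_left inner_add_left norm_eq_1 algebra_simps)
  qed
qed

lemma normal_to_frontier_at_nearest_point:
  fixes \<Omega> :: "'a::real_inner set"
  assumes "open \<Omega>" "0 < d" and ball: "ball x d \<subseteq> \<Omega>" and \<nu>: "p - x = d *\<^sub>R \<nu>" "norm \<nu> = 1"
    and below: "\<And>z. z \<in> closure \<Omega> \<Longrightarrow> (z - p) \<bullet> \<nu> \<le> 0"
  shows "normal_to_frontier \<Omega> p \<nu>"
  unfolding normal_to_frontier_def
proof (rule Lim_null_comparison)
  have "((\<lambda>y. norm (y - p) / (2 * d)) \<longlongrightarrow> norm (p - p) / (2 * d)) (at p within frontier \<Omega>)"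
    using \<open>0 < d\<close> by (intro tendsto_intros) auto
  then show "((\<lambda>y. norm (y - p) / (2 * d)) \<longlongrightarrow> 0) (at p within frontier \<Omega>)"
    by simp
  have "\<bar>(y - p) \<bullet> \<nu>\<bar> / norm (y - p) \<le> norm (y - p) / (2 * d)" if y: "y \<in> frontier \<Omega>" "y \<noteq> p" for y
  proof -
    have "y \<notin> ball x d"
      using y(1) ball \<open>open \<Omega>\<close> by (auto simp: frontier_def interior_open)
    then have "d\<^sup>2 \<le> (norm (y - x))\<^sup>2"
      using \<open>0 < d\<close> by (simp add: dist_norm norm_minus_commute power_mono)
    also have "y - x = (y - p) + d *\<^sub>R \<nu>"
      using \<nu>(1) by (simp add: algebra_simps)
    also have "(norm ((y - p) + d *\<^sub>R \<nu>))\<^sup>2 = (norm (y - p))\<^sup>2 + 2 * d * ((y - p) \<bullet> \<nu>) + d\<^sup>2"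
      using \<nu>(2) unfolding power2_norm_eq_inner
      by (simp add: inner_add inner_diff inner_commute norm_eq_1 power2_eq_square algebra_simps)
    finally have "- ((y - p) \<bullet> \<nu>) \<le> (norm (y - p))\<^sup>2 / (2 * d)"
      using \<open>0 < d\<close> by (simp add: field_simps)
    moreover have "(y - p) \<bullet> \<nu> \<le> 0"
      using below y(1) unfolding frontier_def by blast
    ultimately have "\<bar>(y - p) \<bullet> \<nu>\<bar> \<le> (norm (y - p))\<^sup>2 / (2 * d)"
      by simp
    then show ?thesis
      using y(2) by (simp add: divide_le_eq power2_eq_square)
  qed
  then show "\<forall>\<^sub>F y in at p within frontier \<Omega>. norm (((y - p) \<bullet> \<nu>) / norm (y - p)) \<le> norm (y - p) / (2 * d)"
    by (auto simp: eventually_at_filter abs_divide)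
qed

lemma ext_normal_at_nearest_point:
  fixes \<Omega> :: "(real^2) set"
  assumes "open \<Omega>" "convex \<Omega>" and p: "p \<in> frontier \<Omega>" and "0 < dist x p" and ball: "ball x (dist x p) \<subseteq> \<Omega>"
    and tangent: "v \<noteq> 0" "\<And>\<mu>. normal_to_frontier \<Omega> p \<mu> \<Longrightarrow> \<mu> \<bullet> v = 0"
  shows "ext_normal \<Omega> p = (p - x) /\<^sub>R dist x p" and "((p - x) /\<^sub>R dist x p) \<bullet> v = 0"
proof -
  define d where "d = dist x p"
  define \<nu> where "\<nu> = (p - x) /\<^sub>R d"
  have "0 < d" "ball x d \<subseteq> \<Omega>"
    using assms by (simp_all add: d_def)
  have \<nu>: "p - x = d *\<^sub>R \<nu>" "norm \<nu> = 1"
    using \<open>0 < d\<close> by (simp_all add: \<nu>_def d_def dist_norm norm_minus_commute)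
  have "p \<notin> \<Omega>"
    using p \<open>open \<Omega>\<close> by (simp add: frontier_def interior_open)
  have "\<Omega> \<subseteq> {z. (z - p) \<bullet> \<nu> \<le> 0}"
    using nearest_point_halfplane[OF assms(1,2) \<open>p \<notin> \<Omega>\<close> \<open>0 < d\<close> \<open>ball x d \<subseteq> \<Omega>\<close> \<nu>]
    by (auto intro: less_imp_le)
  then have "closure \<Omega> \<subseteq> {z. (z - p) \<bullet> \<nu> \<le> 0}"
    by (rule closure_minimal) (intro closed_Collect_le continuous_intros)
  then have below: "(z - p) \<bullet> \<nu> \<le> 0" if "z \<in> closure \<Omega>" for z
    using that by blast
  have normal: "normal_to_frontier \<Omega> p \<nu>"
    by (rule normal_to_frontier_at_nearest_point[OF \<open>open \<Omega>\<close> \<open>0 < d\<close> \<open>ball x d \<subseteq> \<Omega>\<close> \<nu> below])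
  have "p + t *\<^sub>R \<nu> \<notin> closure \<Omega>" if "0 < t" for t
    using below[of "p + t *\<^sub>R \<nu>"] that \<nu>(2) by (auto simp: norm_eq_1)
  then have "\<forall>\<^sub>F t in at_right 0. p + t *\<^sub>R \<nu> \<notin> closure \<Omega>"
    unfolding eventually_at_right_field by (auto intro!: exI[of _ 1])
  then have ext: "is_ext_unit_normal \<Omega> p \<nu>"
    using normal \<nu>(2) unfolding is_ext_unit_normal_def normal_to_frontier_def by blast
  have "\<mu> = \<nu>" if \<mu>: "is_ext_unit_normal \<Omega> p \<mu>" for \<mu>
  proof (rule ccontr)
    assume "\<mu> \<noteq> \<nu>"
    moreover have "\<mu> \<bullet> v = 0" "norm \<mu> = 1"
      using \<mu> tangent(2) unfolding is_ext_unit_normal_def normal_to_frontier_def by blast+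
    ultimately have "\<mu> = - \<nu>"
      using orthogonal_unit_vectors_real2[OF tangent(1) _ tangent(2)[OF normal] _ \<nu>(2)] by blast
    obtain b where "0 < b" and b: "\<And>t. 0 < t \<Longrightarrow> t < b \<Longrightarrow> p + t *\<^sub>R \<mu> \<notin> closure \<Omega>"
      using \<mu> unfolding is_ext_unit_normal_def eventually_at_right_field by blast
    define t where "t = min b d / 2"
    have "0 < t" "t < d" and outside: "p + t *\<^sub>R \<mu> \<notin> closure \<Omega>"
      using \<open>0 < b\<close> \<open>0 < d\<close> b by (auto simp: t_def)
    have "p + t *\<^sub>R \<mu> = x + (d - t) *\<^sub>R \<nu>"
      using \<open>\<mu> = - \<nu>\<close> \<nu>(1) by (simp add: algebra_simps)
    then have "p + t *\<^sub>R \<mu> \<in> ball x d"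
      using \<nu>(2) \<open>0 < t\<close> \<open>t < d\<close> by (simp add: dist_norm)
    then show False
      using outside \<open>ball x d \<subseteq> \<Omega>\<close> closure_subset by blast
  qed
  then show "ext_normal \<Omega> p = (p - x) /\<^sub>R dist x p"
    using ext unfolding ext_normal_def \<nu>_def d_def by (rule the_equality[rotated])
  show "((p - x) /\<^sub>R dist x p) \<bullet> v = 0"
    using tangent(2)[OF normal] by (simp add: \<nu>_def d_def)
qed

section \<open>Exterior points near the boundary\<close>

lemma segment_meets_frontier:
  fixes a b :: "'a::real_normed_vector"
  assumes "a \<in> S" "b \<notin> S"
  obtains u where "0 \<le> u" "u \<le> 1" "(1 - u) *\<^sub>R a + u *\<^sub>R b \<in> frontier S"
proof -
  have "closed_segment a b \<inter> frontier S \<noteq> {}"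
    by (rule connected_Int_frontier) (use assms in auto)
  then obtain q where "q \<in> closed_segment a b" "q \<in> frontier S"
    by blast
  then show ?thesis
    using that unfolding in_segment(1) by blast
qed

lemma inward_normal_segment_in_domain:
  fixes \<Omega> :: "'a::real_inner set"
  assumes \<nu>: "norm \<nu> = 1" and "0 \<le> K"
    and flat: "\<And>q. q \<in> frontier \<Omega> \<Longrightarrow> dist q p < r \<Longrightarrow> \<bar>(q - p) \<bullet> \<nu>\<bar> \<le> K * (dist q p)\<^sup>2"
    and "0 < \<epsilon>" and inward: "\<And>t. 0 < t \<Longrightarrow> t < \<epsilon> \<Longrightarrow> p - t *\<^sub>R \<nu> \<in> \<Omega>"
    and "0 < T" "T < r" "K * T < 1"
  shows "p - T *\<^sub>R \<nu> \<in> \<Omega>"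
proof (rule ccontr)
  assume "p - T *\<^sub>R \<nu> \<notin> \<Omega>"
  define s where "s = min \<epsilon> T / 2"
  have "0 < s" "s \<le> T" "p - s *\<^sub>R \<nu> \<in> \<Omega>"
    using \<open>0 < \<epsilon>\<close> \<open>0 < T\<close> inward by (auto simp: s_def)
  then obtain u where u: "0 \<le> u" "u \<le> 1"
    and "(1 - u) *\<^sub>R (p - s *\<^sub>R \<nu>) + u *\<^sub>R (p - T *\<^sub>R \<nu>) \<in> frontier \<Omega>"
    using segment_meets_frontier \<open>p - T *\<^sub>R \<nu> \<notin> \<Omega>\<close> by metis
  moreover define t where "t = (1 - u) * s + u * T"
  moreover have "(1 - u) *\<^sub>R (p - s *\<^sub>R \<nu>) + u *\<^sub>R (p - T *\<^sub>R \<nu>) = p - t *\<^sub>R \<nu>"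
    by (simp add: t_def algebra_simps)
  ultimately have "p - t *\<^sub>R \<nu> \<in> frontier \<Omega>"
    by simp
  have "t = s + u * (T - s)"
    by (simp add: t_def algebra_simps)
  moreover have "0 \<le> u * (T - s)" "u * (T - s) \<le> T - s"
    using u \<open>s \<le> T\<close> by (simp_all add: mult_left_le_one_le)
  ultimately have "s \<le> t" "t \<le> T"
    by linarith+
  then have "0 < t"
    using \<open>0 < s\<close> by linarith
  have "t \<le> K * t\<^sup>2"
    using flat[OF \<open>p - t *\<^sub>R \<nu> \<in> frontier \<Omega>\<close>] \<nu> \<open>0 < t\<close> \<open>t \<le> T\<close> \<open>T < r\<close>
    by (simp add: dist_norm norm_eq_1)
  then have "1 \<le> K * t"
    using \<open>0 < t\<close> by (simp add: power2_eq_square)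
  also have "\<dots> \<le> K * T"
    using \<open>0 \<le> K\<close> \<open>t \<le> T\<close> by (rule mult_left_mono[rotated])
  finally show False
    using \<open>K * T < 1\<close> by simp
qed

lemma exterior_points_near_tangent_line:
  fixes \<Omega> :: "'a::real_inner set"
  assumes \<nu>: "norm \<nu> = 1" and "0 \<le> K"
    and flat: "\<And>q. q \<in> frontier \<Omega> \<Longrightarrow> dist q p < r \<Longrightarrow> \<bar>(q - p) \<bullet> \<nu>\<bar> \<le> K * (dist q p)\<^sup>2"
    and "0 < \<epsilon>" and inward: "\<And>t. 0 < t \<Longrightarrow> t < \<epsilon> \<Longrightarrow> p - t *\<^sub>R \<nu> \<in> \<Omega>"
    and "0 < \<delta>" "2 * \<delta> < r" "2 * K * \<delta> < 1"
    and "dist x p \<le> \<delta>" and y: "y \<notin> \<Omega>" "dist y x \<le> \<delta>"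
  shows "- (4 * K * \<delta>\<^sup>2) \<le> (y - p) \<bullet> \<nu>"
proof (cases "0 \<le> (y - p) \<bullet> \<nu>")
  case True
  moreover have "0 \<le> 4 * K * \<delta>\<^sup>2"
    using \<open>0 \<le> K\<close> by simp
  ultimately show ?thesis
    by linarith
next
  case False
  define a where "a = p - (2 * \<delta>) *\<^sub>R \<nu>"
  have "a \<in> \<Omega>"
    unfolding a_def using \<open>0 < \<delta>\<close> \<open>2 * \<delta> < r\<close> \<open>2 * K * \<delta> < 1\<close>
    by (intro inward_normal_segment_in_domain[OF \<nu> \<open>0 \<le> K\<close> flat \<open>0 < \<epsilon>\<close> inward]) auto
  have "norm (y - p) \<le> 2 * \<delta>"
    using norm_triangle_ineq[of "y - x" "x - p"] \<open>dist x p \<le> \<delta>\<close> y(2) by (simp add: dist_norm)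
  then have "- (2 * \<delta>) \<le> (y - p) \<bullet> \<nu>"
    using Cauchy_Schwarz_ineq2[of "y - p" \<nu>] \<nu> by simp
  obtain u where u: "0 \<le> u" "u \<le> 1" and "(1 - u) *\<^sub>R a + u *\<^sub>R y \<in> frontier \<Omega>"
    using segment_meets_frontier[OF \<open>a \<in> \<Omega>\<close> y(1)] by blast
  moreover define q where "q = (1 - u) *\<^sub>R a + u *\<^sub>R y"
  ultimately have "q \<in> frontier \<Omega>"
    by simp
  have qp: "q - p = (1 - u) *\<^sub>R (a - p) + u *\<^sub>R (y - p)"
    by (simp add: q_def algebra_simps)
  have "norm (q - p) \<le> (1 - u) * norm (a - p) + u * norm (y - p)"
    unfolding qp using norm_triangle_ineq u by (metis abs_of_nonneg diff_ge_0_iff_ge norm_scaleR)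
  also have "\<dots> \<le> (1 - u) * (2 * \<delta>) + u * (2 * \<delta>)"
    using u \<nu> \<open>0 < \<delta>\<close> \<open>norm (y - p) \<le> 2 * \<delta>\<close> by (simp add: a_def mult_left_mono)
  finally have "dist q p \<le> 2 * \<delta>"
    by (simp add: dist_norm algebra_simps)
  have "(q - p) \<bullet> \<nu> = (1 - u) * (- (2 * \<delta>)) + u * ((y - p) \<bullet> \<nu>)"
    using \<nu> by (simp add: qp a_def inner_add_left inner_diff_left norm_eq_1)
  also have "\<dots> \<le> (1 - u) * ((y - p) \<bullet> \<nu>) + u * ((y - p) \<bullet> \<nu>)"
    using mult_left_mono[OF \<open>- (2 * \<delta>) \<le> (y - p) \<bullet> \<nu>\<close>, of "1 - u"] u by simp
  also have "\<dots> = (y - p) \<bullet> \<nu>"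
    by (simp add: algebra_simps)
  finally have "(q - p) \<bullet> \<nu> \<le> (y - p) \<bullet> \<nu>" .
  moreover have "\<bar>(q - p) \<bullet> \<nu>\<bar> \<le> K * (dist q p)\<^sup>2"
    using flat[OF \<open>q \<in> frontier \<Omega>\<close>] \<open>dist q p \<le> 2 * \<delta>\<close> \<open>2 * \<delta> < r\<close> by simp
  moreover have "K * (dist q p)\<^sup>2 \<le> K * (2 * \<delta>)\<^sup>2"
    using \<open>dist q p \<le> 2 * \<delta>\<close> \<open>0 \<le> K\<close> by (intro mult_left_mono power_mono) auto
  ultimately show ?thesis
    using False by (simp add: power_mult_distrib)
qed

section \<open>The rescaled kernel\<close>

context
  fixes J :: "real \<Rightarrow> real"
  assumes J: "admissible_kernel J"
begin

lemma admissible_kernel_nonneg: "0 \<le> r \<Longrightarrow> 0 \<le> J r"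
  using J unfolding admissible_kernel_def by blast

lemma admissible_kernel_le_zero: "0 \<le> r \<Longrightarrow> J r \<le> J 0"
  using J unfolding admissible_kernel_def by blast

lemma admissible_kernel_vanishes: "1 < r \<Longrightarrow> J r = 0"
  using J unfolding admissible_kernel_def by blast

lemma admissible_kernel_zero_pos: "0 < J 0"
  using J unfolding admissible_kernel_def by simp

lemma admissible_kernel_second_moment:
  "((\<lambda>z::real^2. J (norm z) * (norm z)\<^sup>2) has_integral 2) UNIV"
  using J unfolding admissible_kernel_def by blast

lemma J_delta_norm_measurable:
  assumes "0 < \<delta>"
  shows "(\<lambda>z::real^2. J_delta J \<delta> (norm z)) \<in> borel_measurable borel"
proof -
  have "mono (\<lambda>r. - J (max 0 r))"
    using J unfolding admissible_kernel_def mono_def by (metis max.cobounded1 max.mono neg_le_iff_le order_refl)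
  then have "(\<lambda>r. - J (max 0 r)) \<in> borel_measurable borel"
    by (rule borel_measurable_mono)
  then have "(\<lambda>r. J (max 0 r)) \<in> borel_measurable borel"
    using borel_measurable_uminus by fastforce
  then have "(\<lambda>z::real^2. J (max 0 (norm z / \<delta>)) / \<delta> ^ 4) \<in> borel_measurable borel"
    by measurable
  moreover have "max 0 (norm z / \<delta>) = norm z / \<delta>" for z :: "real^2"
    using assms by simp
  ultimately show ?thesis
    by (simp add: J_delta_def)
qed

lemma J_delta_nonneg: "0 < \<delta> \<Longrightarrow> 0 \<le> J_delta J \<delta> (norm z)"
  unfolding J_delta_def by (intro divide_nonneg_pos admissible_kernel_nonneg) auto

lemma J_delta_le: "0 < \<delta> \<Longrightarrow> J_delta J \<delta> (norm z) \<le> J 0 / \<delta> ^ 4"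
  unfolding J_delta_def by (intro divide_right_mono admissible_kernel_le_zero) auto

lemma J_delta_vanishes: "0 < \<delta> \<Longrightarrow> \<delta> < norm z \<Longrightarrow> J_delta J \<delta> (norm z) = 0"
  unfolding J_delta_def by (simp add: admissible_kernel_vanishes)

lemma J_delta_times_bounded_absolutely_integrable:
  fixes h :: "real^2 \<Rightarrow> real"
  assumes "0 < \<delta>" and h: "h \<in> borel_measurable lebesgue"
    and bound: "\<And>w. norm w \<le> \<delta> \<Longrightarrow> \<bar>h w\<bar> \<le> C"
  shows "(\<lambda>w. J_delta J \<delta> (norm w) * h w) absolutely_integrable_on UNIV"
proof (rule absolutely_integrable_bounded_support)
  show "(\<lambda>w. J_delta J \<delta> (norm w) * h w) \<in> borel_measurable lebesgue"
    using borel_measurable_lebesgueI[OF J_delta_norm_measurable[OF assms(1)]] h by simp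
  have "0 \<le> C" using bound[of 0] assms(1) by fastforce
  show "\<bar>J_delta J \<delta> (norm w) * h w\<bar> \<le> (J 0 / \<delta> ^ 4 * C) * indicator (cball 0 \<delta>) w" for w
  proof (cases "norm w \<le> \<delta>")
    case True
    then have "J_delta J \<delta> (norm w) * \<bar>h w\<bar> \<le> J 0 / \<delta> ^ 4 * C"
      using J_delta_nonneg J_delta_le bound \<open>0 \<le> C\<close> assms(1) admissible_kernel_zero_pos
      by (intro mult_mono) auto
    then show ?thesis
      using True J_delta_nonneg[OF assms(1), of w] by (simp add: abs_mult)
  qed (use J_delta_vanishes[OF assms(1), of w] in auto)
qed

lemma J_delta_second_moment:
  assumes "0 < \<delta>"
  shows "((\<lambda>w::real^2. J_delta J \<delta> (norm w) * (norm w)\<^sup>2) has_integral 2) UNIV"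
proof -
  define f where "f = (\<lambda>z::real^2. J (norm z) * (norm z)\<^sup>2)"
  have f_int: "(f has_integral 2) UNIV"
    using admissible_kernel_second_moment by (simp add: f_def)
  have f: "f absolutely_integrable_on UNIV"
    by (rule nonnegative_absolutely_integrable_1[OF has_integral_integrable[OF f_int]])
      (simp add: f_def admissible_kernel_nonneg)
  have "bij ((*\<^sub>R) (1 / \<delta>) :: real^2 \<Rightarrow> real^2)"
    by (rule o_bij[where g="(*\<^sub>R) \<delta>"]) (use assms in \<open>auto simp: fun_eq_iff\<close>)
  note rescale = linear_change_of_variables_real[OF linear_scaleR this f, of 0, unfolded add_0]
  have "integral UNIV (\<lambda>w. f ((1 / \<delta>) *\<^sub>R w)) = 2 * \<delta>\<^sup>2"
    using rescale(2) integral_unique[OF f_int] assms by (simp add: power_divide divide_eq_eq)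
  moreover have "(\<lambda>w. f ((1 / \<delta>) *\<^sub>R w)) integrable_on UNIV"
    using rescale(1) by (simp add: absolutely_integrable_on_def)
  ultimately have "((\<lambda>w. f ((1 / \<delta>) *\<^sub>R w)) has_integral 2 * \<delta>\<^sup>2) UNIV"
    using has_integral_integral by metis
  then have "((\<lambda>w. f ((1 / \<delta>) *\<^sub>R w) / \<delta>\<^sup>2) has_integral 2 * \<delta>\<^sup>2 / \<delta>\<^sup>2) UNIV"
    by (rule has_integral_divide)
  moreover have "f ((1 / \<delta>) *\<^sub>R w) / \<delta>\<^sup>2 = J_delta J \<delta> (norm w) * (norm w)\<^sup>2" for w
  proof -
    have "norm ((1 / \<delta>) *\<^sub>R w) = norm w / \<delta>" using assms by simp
    then show ?thesis
      using assms by (simp add: f_def J_delta_def field_simps power2_eq_square power4_eq_xxxx)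
  qed
  ultimately show ?thesis
    using assms by simp
qed

lemma J_delta_positive_part_moment:
  assumes "0 < \<delta>"
  shows "((\<lambda>w::real^2. J_delta J \<delta> (norm w) * (max 0 (w$1))\<^sup>2) has_integral 1/2) UNIV"
proof -
  have max_zero_squares: "(max 0 a)\<^sup>2 + (max 0 (- a))\<^sup>2 = a\<^sup>2" for a :: real
    by (cases "0 \<le> a") (simp_all add: max_def)
  define f where "f w = J_delta J \<delta> (norm w) * (max 0 (w$1))\<^sup>2" for w :: "real^2"
  define \<rho> where "\<rho> w = ((\<chi> i. if i = 1 then - w$2 else w$1) :: real^2)" for w :: "real^2"
  have \<rho>_components: "\<rho> w $ 1 = - w$2" "\<rho> w $ 2 = w$1" for w :: "real^2"
    by (simp_all add: \<rho>_def)
  have "linear \<rho>"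
    by (rule linearI) (simp_all add: vec_eq_iff forall_2 \<rho>_components)
  moreover have norm_\<rho>: "norm (\<rho> w) = norm w" for w
    by (simp add: norm_vec_def L2_set_def sum_2 \<rho>_components)
  ultimately have \<rho>: "orthogonal_transformation \<rho>"
    by (simp add: orthogonal_transformation)
  have "(\<lambda>w::real^2. (max 0 (w$1))\<^sup>2) \<in> borel_measurable lebesgue"
    by (rule borel_measurable_lebesgueI) measurable
  moreover have "\<bar>(max 0 (w$1))\<^sup>2\<bar> \<le> \<delta>\<^sup>2" if "norm w \<le> \<delta>" for w :: "real^2"
    using component_le_norm_cart[of w 1] that by (auto simp: max_def intro!: power_mono)
  ultimately have f: "f absolutely_integrable_on UNIV"
    unfolding f_def by (rule J_delta_times_bounded_absolutely_integrable[OF assms])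
  \<comment> \<open>The quarter turns carry \<open>max 0 w\<^sub>1\<close> to the positive and negative parts of both
    coordinates, whose squares add up to \<open>|w|\<^sup>2\<close>.\<close>
  have quarter_turns: "(\<lambda>w. f ((\<rho> ^^ k) w)) absolutely_integrable_on UNIV \<and>
      integral UNIV (\<lambda>w. f ((\<rho> ^^ k) w)) = integral UNIV f" for k
  proof (induction k)
    case (Suc k)
    then show ?case
      using orthogonal_change_of_variables_real[OF \<rho>, of "\<lambda>w. f ((\<rho> ^^ k) w)" 0]
      by (simp add: funpow_Suc_right del: funpow.simps)
  qed (simp add: f)
  have "(\<Sum>k<4. f ((\<rho> ^^ k) w)) = J_delta J \<delta> (norm w) * (norm w)\<^sup>2" for w
  proof -
    have "(\<Sum>k<4. f ((\<rho> ^^ k) w)) = f w + f (\<rho> w) + f (\<rho> (\<rho> w)) + f (\<rho> (\<rho> (\<rho> w)))"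
      by (simp add: eval_nat_numeral)
    also have "\<dots> = J_delta J \<delta> (norm w) *
        (((max 0 (w$1))\<^sup>2 + (max 0 (- w$1))\<^sup>2) + ((max 0 (w$2))\<^sup>2 + (max 0 (- w$2))\<^sup>2))"
      by (simp add: f_def \<rho>_components norm_\<rho> distrib_left)
    also have "\<dots> = J_delta J \<delta> (norm w) * (norm w)\<^sup>2"
      using max_zero_squares by (simp add: norm_real2_squared)
    finally show ?thesis .
  qed
  moreover have "((\<lambda>w. f ((\<rho> ^^ k) w)) has_integral integral UNIV f) UNIV" for k
    using quarter_turns[of k] by (metis absolutely_integrable_on_def has_integral_integral)
  then have "((\<lambda>w. \<Sum>k<4. f ((\<rho> ^^ k) w)) has_integral (\<Sum>k<4::nat. integral UNIV f)) UNIV"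
    by (intro has_integral_sum) auto
  ultimately have "((\<lambda>w::real^2. J_delta J \<delta> (norm w) * (norm w)\<^sup>2) has_integral 4 * integral UNIV f) UNIV"
    by simp
  then have "4 * integral UNIV f = 2"
    using J_delta_second_moment[OF assms] by (rule has_integral_unique)
  then have "integral UNIV f = 1/2"
    by simp
  then have "(f has_integral 1/2) UNIV"
    using f by (metis absolutely_integrable_on_def has_integral_integral)
  then show ?thesis
    unfolding f_def .
qed

lemma J_delta_restricted_quadratic_integrable:
  assumes "0 < \<delta>" "0 \<le> d" "d \<le> \<delta>" and F: "F \<in> sets lebesgue"
  shows "(\<lambda>w::real^2. J_delta J \<delta> (norm w) * (if w \<in> F then (w$1)\<^sup>2 - 2 * d * w$1 else 0))
    absolutely_integrable_on UNIV"
proof (rule J_delta_times_bounded_absolutely_integrable[OF assms(1)])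
  have "(\<lambda>w::real^2. (w$1)\<^sup>2 - 2 * d * w$1) \<in> borel_measurable lebesgue"
    by (rule borel_measurable_lebesgueI) measurable
  then show "(\<lambda>w::real^2. if w \<in> F then (w$1)\<^sup>2 - 2 * d * w$1 else 0) \<in> borel_measurable lebesgue"
    using F by (intro measurable_If_set) auto
  show "\<bar>if w \<in> F then (w$1)\<^sup>2 - 2 * d * w$1 else 0\<bar> \<le> 3 * \<delta>\<^sup>2" if "norm w \<le> \<delta>" for w :: "real^2"
    using first_coordinate_quadratic_bound[OF that assms(2,3)] by simp
qed

lemma J_delta_halfplane_bound:
  assumes "0 < \<delta>" "0 \<le> d" "d \<le> \<delta>"
  shows "\<bar>integral UNIV (\<lambda>w::real^2. J_delta J \<delta> (norm w) *
      (if w \<in> {w. d \<le> w$1} then (w$1)\<^sup>2 - 2 * d * w$1 else 0))\<bar> \<le> 1/2"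
proof -
  have "{w::real^2. d \<le> w$1} \<in> sets lebesgue"
    by (intro closed_imp_sets_lebesgue closed_Collect_le continuous_intros)
  note integrable = J_delta_restricted_quadratic_integrable[OF assms this]
  have "\<bar>if d \<le> w$1 then (w$1)\<^sup>2 - 2 * d * w$1 else 0\<bar> \<le> (max 0 (w$1))\<^sup>2" for w :: "real^2"
  proof (cases "d \<le> w$1")
    case True
    have "(w$1)\<^sup>2 - 2 * d * w$1 = w$1 * (w$1 - 2 * d)"
      by (simp add: power2_eq_square algebra_simps)
    then have "\<bar>(w$1)\<^sup>2 - 2 * d * w$1\<bar> = w$1 * \<bar>w$1 - 2 * d\<bar>"
      using True \<open>0 \<le> d\<close> by (simp add: abs_mult)
    also have "\<dots> \<le> w$1 * w$1"
      using True \<open>0 \<le> d\<close> by (intro mult_left_mono) auto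
    finally show ?thesis
      using True \<open>0 \<le> d\<close> by (simp add: power2_eq_square)
  qed simp
  then have "norm (J_delta J \<delta> (norm w) * (if w \<in> {w. d \<le> w$1} then (w$1)\<^sup>2 - 2 * d * w$1 else 0))
      \<le> J_delta J \<delta> (norm w) * (max 0 (w$1))\<^sup>2" for w :: "real^2"
    using J_delta_nonneg[OF \<open>0 < \<delta>\<close>, of w] by (simp add: abs_mult mult_left_mono)
  then have "norm (integral UNIV (\<lambda>w::real^2. J_delta J \<delta> (norm w) *
      (if w \<in> {w. d \<le> w$1} then (w$1)\<^sup>2 - 2 * d * w$1 else 0)))
      \<le> integral UNIV (\<lambda>w::real^2. J_delta J \<delta> (norm w) * (max 0 (w$1))\<^sup>2)"
    using integrable J_delta_positive_part_moment[OF \<open>0 < \<delta>\<close>]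
    by (intro integral_norm_bound_integral) (auto simp: absolutely_integrable_on_def has_integral_integrable)
  then show ?thesis
    using J_delta_positive_part_moment[OF \<open>0 < \<delta>\<close>] by (simp add: integral_unique)
qed

lemma J_delta_thin_strip_bound:
  assumes "0 < \<delta>" "0 \<le> d" "d \<le> \<delta>" "0 \<le> \<epsilon>" and F: "F \<in> sets lebesgue"
    and thin: "\<And>w. w \<in> F \<Longrightarrow> norm w \<le> \<delta> \<Longrightarrow> d - \<epsilon> \<le> w$1 \<and> w$1 \<le> d"
  shows "\<bar>integral UNIV (\<lambda>w::real^2. J_delta J \<delta> (norm w) *
      (if w \<in> F then (w$1)\<^sup>2 - 2 * d * w$1 else 0))\<bar> \<le> 6 * J 0 * \<epsilon> / \<delta>"
proof -
  define lo where "lo = (vector [d - \<epsilon>, - \<delta>] :: real^2)"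
  define hi where "hi = (vector [d, \<delta>] :: real^2)"
  define c where "c = 3 * J 0 / \<delta>\<^sup>2"
  have "lo \<in> cbox lo hi"
    using \<open>0 < \<delta>\<close> \<open>0 \<le> \<epsilon>\<close> by (simp add: mem_box_cart forall_2 lo_def hi_def)
  \<comment> \<open>Qualified because \<open>Polynomial.content\<close> is also in scope.\<close>
  then have "Henstock_Kurzweil_Integration.content (cbox lo hi) = (hi$1 - lo$1) * (hi$2 - lo$2)"
    by (subst content_cbox_cart) (auto simp: UNIV_2)
  then have box: "((\<lambda>w. if w \<in> cbox lo hi then c else 0) has_integral (\<epsilon> * (2 * \<delta>)) * c) UNIV"
    using has_integral_const[of c lo hi] by (simp add: has_integral_restrict_UNIV lo_def hi_def)
  have "0 \<le> c"
    using admissible_kernel_zero_pos by (simp add: c_def)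
  have "norm (J_delta J \<delta> (norm w) * (if w \<in> F then (w$1)\<^sup>2 - 2 * d * w$1 else 0))
      \<le> (if w \<in> cbox lo hi then c else 0)" for w
  proof (cases "w \<in> F \<and> norm w \<le> \<delta>")
    case True
    then have "w \<in> cbox lo hi"
      using thin[of w] component_le_norm_cart[of w 2] by (auto simp: mem_box_cart forall_2 lo_def hi_def)
    moreover have "J_delta J \<delta> (norm w) * \<bar>(w$1)\<^sup>2 - 2 * d * w$1\<bar> \<le> J 0 / \<delta> ^ 4 * (3 * \<delta>\<^sup>2)"
      using True J_delta_nonneg J_delta_le first_coordinate_quadratic_bound assms(1-3)
        admissible_kernel_zero_pos
      by (intro mult_mono) auto
    ultimately show ?thesis
      using True J_delta_nonneg[OF \<open>0 < \<delta>\<close>, of w] \<open>0 < \<delta>\<close>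
      by (simp add: abs_mult c_def power2_eq_square power4_eq_xxxx mult.commute)
  next
    case False
    then show ?thesis
      using J_delta_vanishes[OF \<open>0 < \<delta>\<close>, of w] \<open>0 \<le> c\<close> by auto
  qed
  then have "norm (integral UNIV (\<lambda>w::real^2. J_delta J \<delta> (norm w) *
      (if w \<in> F then (w$1)\<^sup>2 - 2 * d * w$1 else 0))) \<le> (\<epsilon> * (2 * \<delta>)) * c"
    using J_delta_restricted_quadratic_integrable[OF assms(1-3) F] box
    by (intro integral_norm_bound_integral[where g="\<lambda>w. if w \<in> cbox lo hi then c else 0", THEN order_trans])
      (auto simp: absolutely_integrable_on_def has_integral_integrable integral_unique)
  then show ?thesis
    using \<open>0 < \<delta>\<close> by (simp add: c_def power2_eq_square field_simps)
qed

lemma J_delta_exterior_quadratic_bound: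
  assumes "0 < \<delta>" "0 \<le> d" "d \<le> \<delta>" "0 \<le> \<epsilon>" and E: "E \<in> sets lebesgue"
    and halfplane: "{w. d \<le> w$1} \<subseteq> E" and strip: "\<And>w. w \<in> E \<Longrightarrow> norm w \<le> \<delta> \<Longrightarrow> d - \<epsilon> \<le> w$1"
  shows "\<bar>integral UNIV (\<lambda>w::real^2. J_delta J \<delta> (norm w) *
      (if w \<in> E then (w$1)\<^sup>2 - 2 * d * w$1 else 0))\<bar> \<le> 1/2 + 6 * J 0 * \<epsilon> / \<delta>"
proof -
  define H where "H = {w::real^2. d \<le> w$1}"
  define S where "S = E - H"
  let ?f = "\<lambda>A w. J_delta J \<delta> (norm w) * (if w \<in> A then (w$1)\<^sup>2 - 2 * d * w$1 else 0)"
  have "H \<in> sets lebesgue"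
    unfolding H_def by (intro closed_imp_sets_lebesgue closed_Collect_le continuous_intros)
  then have "S \<in> sets lebesgue"
    using E by (simp add: S_def sets.Diff)
  have "?f H integrable_on UNIV" "?f S integrable_on UNIV"
    using J_delta_restricted_quadratic_integrable[OF assms(1-3) \<open>H \<in> sets lebesgue\<close>]
      J_delta_restricted_quadratic_integrable[OF assms(1-3) \<open>S \<in> sets lebesgue\<close>]
    by (simp_all add: absolutely_integrable_on_def)
  moreover have "?f E w = ?f H w + ?f S w" for w
    using halfplane by (auto simp: H_def S_def)
  ultimately have "integral UNIV (?f E) = integral UNIV (?f H) + integral UNIV (?f S)"
    by (simp add: integral_add[symmetric])
  moreover have "\<bar>integral UNIV (?f H)\<bar> \<le> 1/2"
    unfolding H_def by (rule J_delta_halfplane_bound[OF assms(1-3)])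
  moreover have "\<bar>integral UNIV (?f S)\<bar> \<le> 6 * J 0 * \<epsilon> / \<delta>"
    using \<open>S \<in> sets lebesgue\<close> strip
    by (intro J_delta_thin_strip_bound[OF assms(1-4)]) (auto simp: S_def H_def)
  ultimately show ?thesis
    by linarith
qed

lemma exterior_integral_bound:
  fixes \<Omega> :: "(real^2) set" and x p \<nu> :: "real^2"
  assumes "open \<Omega>" "0 < \<delta>" "0 < d" "d \<le> \<delta>" "0 \<le> \<epsilon>" and \<nu>: "norm \<nu> = 1" "p - x = d *\<^sub>R \<nu>"
    and inside: "\<And>z. z \<in> \<Omega> \<Longrightarrow> (z - p) \<bullet> \<nu> < 0"
    and strip: "\<And>y. y \<notin> \<Omega> \<Longrightarrow> dist y x \<le> \<delta> \<Longrightarrow> - \<epsilon> \<le> (y - p) \<bullet> \<nu>"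
  shows "\<bar>integral (UNIV - \<Omega>) (\<lambda>y. J_delta J \<delta> (norm (x - y)) *
      ((\<bar>(y - p) \<bullet> \<nu>\<bar>)\<^sup>2 - (\<bar>(x - p) \<bullet> \<nu>\<bar>)\<^sup>2))\<bar> \<le> 1/2 + 6 * J 0 * \<epsilon> / \<delta>"
proof -
  obtain R :: "real^2 \<Rightarrow> real^2" where R: "orthogonal_transformation R" "\<And>w. R w \<bullet> \<nu> = w$1"
    using rotation_to_unit_vector[OF \<nu>(1)] by blast
  define E where "E = {w. x + R w \<notin> \<Omega>}"
  define G where "G w = J_delta J \<delta> (norm w) * (if w \<in> E then (w$1)\<^sup>2 - 2 * d * w$1 else 0)" for w
  have "x - p = - (d *\<^sub>R \<nu>)"
    using \<nu>(2) by (metis minus_diff_eq)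
  then have "(x - p) \<bullet> \<nu> = - d"
    using \<nu>(1) by (simp add: norm_eq_1)
  then have normal_coordinate: "(x + R w - p) \<bullet> \<nu> = w$1 - d" for w
    using R(2)[of w] by (simp add: inner_diff_left inner_add_left)
  have "norm (x - (x + R w)) = norm w" for w
    using orthogonal_transformation_norm[OF R(1)] by simp
  then have rotated: "(\<lambda>w. if x + R w \<in> UNIV - \<Omega> then J_delta J \<delta> (norm (x - (x + R w))) *
      ((\<bar>(x + R w - p) \<bullet> \<nu>\<bar>)\<^sup>2 - (\<bar>(x - p) \<bullet> \<nu>\<bar>)\<^sup>2) else 0) = G"
    unfolding G_def E_def normal_coordinate \<open>(x - p) \<bullet> \<nu> = - d\<close>
    by (auto simp: power2_eq_square algebra_simps)
  have "continuous_on UNIV (\<lambda>w. x + R w)"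
    using orthogonal_transformation_linear[OF R(1)]
    by (intro continuous_intros linear_continuous_on) (simp add: linear_conv_bounded_linear)
  then have "closed ((\<lambda>w. x + R w) -` (UNIV - \<Omega>))"
    using \<open>open \<Omega>\<close> by (intro closed_vimage) (auto simp: closed_Diff)
  moreover have "(\<lambda>w. x + R w) -` (UNIV - \<Omega>) = E"
    by (auto simp: E_def)
  ultimately have "E \<in> sets lebesgue"
    by (simp add: closed_imp_sets_lebesgue)
  then have "G absolutely_integrable_on UNIV"
    unfolding G_def using assms(2-4) by (intro J_delta_restricted_quadratic_integrable) auto
  then have "integral (UNIV - \<Omega>) (\<lambda>y. J_delta J \<delta> (norm (x - y)) *
      ((\<bar>(y - p) \<bullet> \<nu>\<bar>)\<^sup>2 - (\<bar>(x - p) \<bullet> \<nu>\<bar>)\<^sup>2)) = integral UNIV G"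
    using integral_orthogonal_change_on[OF R(1), where c=x and S="UNIV - \<Omega>" and
        f="\<lambda>y. J_delta J \<delta> (norm (x - y)) * ((\<bar>(y - p) \<bullet> \<nu>\<bar>)\<^sup>2 - (\<bar>(x - p) \<bullet> \<nu>\<bar>)\<^sup>2)"]
    unfolding rotated by blast
  moreover have "\<bar>integral UNIV G\<bar> \<le> 1/2 + 6 * J 0 * \<epsilon> / \<delta>"
    unfolding G_def
  proof (rule J_delta_exterior_quadratic_bound[OF assms(2) _ assms(4,5) \<open>E \<in> sets lebesgue\<close>])
    show "{w. d \<le> w$1} \<subseteq> E"
      using inside normal_coordinate by (force simp: E_def)
    show "d - \<epsilon> \<le> w$1" if "w \<in> E" "norm w \<le> \<delta>" for w
      using strip[of "x + R w"] that normal_coordinate[of w] orthogonal_transformation_norm[OF R(1)]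
      by (simp add: E_def dist_norm)
  qed (use \<open>0 < d\<close> in simp)
  ultimately show ?thesis
    by simp
qed

lemma Q_delta_near_one:
  fixes \<Omega> \<Gamma> :: "(real^2) set"
  assumes "open \<Omega>" "convex \<Omega>" and \<Gamma>: "boundary_curve \<Omega> \<Gamma>"
    and flat: "uniformly_flat_frontier \<Omega> r K" and "0 \<le> K"
    and "0 < \<delta>" "2 * \<delta> < r" "2 * K * \<delta> < 1" and x: "x \<in> B_Omega \<Omega> \<Gamma> \<delta>"
  shows "\<bar>1 - Q_delta J \<Omega> \<delta> x\<bar> \<le> 1/2 + 24 * K * J 0 * \<delta>"
proof -
  have "x \<in> \<Omega>" "infdist x \<Gamma> \<le> \<delta>"
    using x by (auto simp: B_Omega_def)
  have "\<Gamma> \<subseteq> frontier \<Omega>" "\<Gamma> \<noteq> {}"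
    using \<Gamma> path_image_nonempty by (auto simp: boundary_curve_def)
  then have "frontier \<Omega> \<noteq> {}"
    by blast
  define p where "p = proj_bd \<Omega> x"
  note nearest = proj_bd_nearest[OF \<open>open \<Omega>\<close> \<open>x \<in> \<Omega>\<close> \<open>frontier \<Omega> \<noteq> {}\<close>, folded p_def]
  define d where "d = dist x p"
  have "0 < d" "d \<le> \<delta>"
    using nearest(2,3) infdist_mono[OF \<open>\<Gamma> \<subseteq> frontier \<Omega>\<close> \<open>\<Gamma> \<noteq> {}\<close>, of x] \<open>infdist x \<Gamma> \<le> \<delta>\<close>
    by (simp_all add: d_def)
  obtain v where "v \<noteq> 0" and tangent: "\<And>\<mu>. normal_to_frontier \<Omega> p \<mu> \<Longrightarrow> \<mu> \<bullet> v = 0"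
    and quadratic: "\<And>\<nu> q. norm \<nu> = 1 \<Longrightarrow> \<nu> \<bullet> v = 0 \<Longrightarrow> q \<in> frontier \<Omega> \<Longrightarrow> dist q p < r \<Longrightarrow>
      \<bar>(q - p) \<bullet> \<nu>\<bar> \<le> K * (dist q p)\<^sup>2"
    using flat nearest(1) unfolding uniformly_flat_frontier_def by blast
  define \<nu> where "\<nu> = (p - x) /\<^sub>R d"
  have \<nu>: "p - x = d *\<^sub>R \<nu>" "norm \<nu> = 1"
    using \<open>0 < d\<close> by (simp_all add: \<nu>_def d_def dist_norm norm_minus_commute)
  have normal: "ext_normal \<Omega> p = \<nu>" "\<nu> \<bullet> v = 0"
    using ext_normal_at_nearest_point[OF assms(1,2) nearest(1,3,4) \<open>v \<noteq> 0\<close> tangent]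
    by (simp_all add: \<nu>_def d_def)
  have "p \<notin> \<Omega>"
    using nearest(1) \<open>open \<Omega>\<close> by (simp add: frontier_def interior_open)
  have "ball x d \<subseteq> \<Omega>"
    using nearest(4) by (simp add: d_def)
  note inside = nearest_point_halfplane[OF assms(1,2) \<open>p \<notin> \<Omega>\<close> \<open>0 < d\<close> this \<nu>]
  have inward: "p - t *\<^sub>R \<nu> \<in> \<Omega>" if "0 < t" "t < d" for t
  proof -
    have "p - t *\<^sub>R \<nu> = x + (d - t) *\<^sub>R \<nu>"
      using \<nu>(1) by (simp add: algebra_simps)
    then show ?thesis
      using \<open>ball x d \<subseteq> \<Omega>\<close> \<nu>(2) that by (auto simp: dist_norm)
  qed
  have "- (4 * K * \<delta>\<^sup>2) \<le> (y - p) \<bullet> \<nu>" if "y \<notin> \<Omega>" "dist y x \<le> \<delta>" for y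
    using \<open>0 < \<delta>\<close> \<open>2 * \<delta> < r\<close> \<open>2 * K * \<delta> < 1\<close> \<open>d \<le> \<delta>\<close> that
    by (intro exterior_points_near_tangent_line[OF \<nu>(2) \<open>0 \<le> K\<close> quadratic[OF \<nu>(2) normal(2)] \<open>0 < d\<close> inward])
      (auto simp: d_def)
  then have "\<bar>integral (UNIV - \<Omega>) (\<lambda>y. J_delta J \<delta> (norm (x - y)) *
      ((\<bar>(y - p) \<bullet> \<nu>\<bar>)\<^sup>2 - (\<bar>(x - p) \<bullet> \<nu>\<bar>)\<^sup>2))\<bar> \<le> 1/2 + 6 * J 0 * (4 * K * \<delta>\<^sup>2) / \<delta>"
    using \<open>0 \<le> K\<close> by (intro exterior_integral_bound[OF \<open>open \<Omega>\<close> \<open>0 < \<delta>\<close> \<open>0 < d\<close> \<open>d \<le> \<delta>\<close> _ \<nu>(2,1) inside]) auto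
  moreover have "Q_delta J \<Omega> \<delta> x = 1 - integral (UNIV - \<Omega>) (\<lambda>y. J_delta J \<delta> (norm (x - y)) *
      ((\<bar>(y - p) \<bullet> \<nu>\<bar>)\<^sup>2 - (\<bar>(x - p) \<bullet> \<nu>\<bar>)\<^sup>2))"
    unfolding Q_delta_def Let_def p_def[symmetric] normal(1) ..
  moreover have "6 * J 0 * (4 * K * \<delta>\<^sup>2) / \<delta> = 24 * K * J 0 * \<delta>"
    using \<open>0 < \<delta>\<close> by (simp add: power2_eq_square)
  ultimately show ?thesis
    by simp
qed

end

theorem lemma1:
  fixes \<Omega> \<Gamma> :: "(real^2) set" and J :: "real \<Rightarrow> real"
  assumes "bounded \<Omega>" and "connected \<Omega>" and "convex \<Omega>" and "open \<Omega>"
    and "C3_boundary \<Omega>"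
    and "boundary_curve \<Omega> \<Gamma>"
    and "admissible_kernel J"
  shows "\<exists>\<delta>b>0. \<exists>Cq>0. \<forall>\<delta>. 0 < \<delta> \<and> \<delta> \<le> \<delta>b \<longrightarrow>
           (\<forall>x\<in>B_Omega \<Omega> \<Gamma> \<delta>.
              0 < 1/2 - Cq * \<delta> \<and> 1/2 - Cq * \<delta> \<le> Q_delta J \<Omega> \<delta> x \<and>
              Q_delta J \<Omega> \<delta> x \<le> 3/2 + Cq * \<delta>)"
proof -
  obtain r K where "0 < r" "0 < K" and flat: "uniformly_flat_frontier \<Omega> r K"
    using C3_boundary_uniformly_flat[OF assms(5)] by blast
  define Cq where "Cq = 24 * K * J 0 + 1"
  define \<delta>b where "\<delta>b = min (min (r / 4) (1 / (4 * K))) (1 / (4 * Cq))"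
  have "0 \<le> 24 * K * J 0"
    using admissible_kernel_zero_pos[OF assms(7)] \<open>0 < K\<close> by simp
  then have "0 < Cq"
    by (simp add: Cq_def)
  then have "0 < \<delta>b"
    using \<open>0 < r\<close> \<open>0 < K\<close> by (simp add: \<delta>b_def)
  have "0 < 1/2 - Cq * \<delta> \<and> 1/2 - Cq * \<delta> \<le> Q_delta J \<Omega> \<delta> x \<and> Q_delta J \<Omega> \<delta> x \<le> 3/2 + Cq * \<delta>"
    if "0 < \<delta>" "\<delta> \<le> \<delta>b" "x \<in> B_Omega \<Omega> \<Gamma> \<delta>" for \<delta> x
  proof -
    have "2 * \<delta> < r" "K * \<delta> \<le> 1/4" "Cq * \<delta> \<le> 1/4"
      using that(2) \<open>0 < r\<close> \<open>0 < K\<close> \<open>0 < Cq\<close> by (auto simp: \<delta>b_def field_simps)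
    then have "\<bar>1 - Q_delta J \<Omega> \<delta> x\<bar> \<le> 1/2 + 24 * K * J 0 * \<delta>"
      using \<open>0 < K\<close> that(1,3)
      by (intro Q_delta_near_one[OF assms(7,4,3,6) flat]) auto
    moreover have "24 * K * J 0 * \<delta> \<le> Cq * \<delta>"
      using \<open>0 < \<delta>\<close> by (simp add: Cq_def)
    ultimately show ?thesis
      using \<open>Cq * \<delta> \<le> 1/4\<close> by (simp add: abs_le_iff)
  qed
  then show ?thesis
    using \<open>0 < \<delta>b\<close> \<open>0 < Cq\<close> by blast
qed

end
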